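(* Let $\rho_{AE}\in\mathcal S(AE)$ with $A=A_1\otimes A_2$, let $\{U_1,\dots,U_L\}$ be unitaries on $A$ with corresponding measurements $\mathcal M^j_{A\to K_1}(\cdot)=\mathcal I_{A_1\to K_1}(\mathcal T_{A\to A_1}(U_j\cdot U_j^\dagger))$, and suppose \[ \frac1L\sum_{j=1}^L\Bigl\|\mathcal M^j_{A\to K_1}(\rho_{AE})-\frac{\mathbb I_{K_1}}{|K_1|}\otimes\rho_E\Bigr\|_1\le\varepsilon(\rho) \] for some number $\varepsilon(\rho)$. Then $H_{\min}^{\sqrt{2\varepsilon(\rho)}}(K_1|EJ)_\rho\ge\log|K_1|$, where $\rho_{K_1EJ}=\frac1L\sum_{j=1}^L\mathcal M^j_{A\to K_1}(\rho_{AE})\otimes|j\rangle\langle j|_J$.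
   Context: All Hilbert spaces are finite-dimensional; $\log$ is base 2; $\mathcal S$ density operators, $\mathcal S_{\le}$ positive operators of trace $\le1$. Fix computational bases $\{|a_1\rangle\}$ of $A_1$, $\{|a_2\rangle\}$ of $A_2$; $\mathcal T_{A\to A_1}(X)=\sum_{a_1,a_2}\langle a_1a_2|X|a_1a_2\rangle|a_1\rangle\langle a_1|$ (applied as $\mathcal T\otimes\mathrm{id}_E$); $K_1$ is a copy of $A_1$ and $\mathcal I_{A_1\to K_1}$ the identity relabeling $|a_1\rangle\langle a_1'|\mapsto|a_1\rangle\langle a_1'|$; $J$ is a classical register with orthonormal basis $\{|j\rangle\}_{j=1}^L$. For $\rho_{AB}\in\mathcal S_{\le}(AB)$, $\sigma_B\in\mathcal S(B)$: $H_{\min}(A|B)_{\rho|\sigma}=\max\{\lambda:2^{-\lambda}\mathbb I_A\otimes\sigma_B\ge\rho_{AB}\}$, $H_{\min}(A|B)_\rho=\max_{\sigma_B}H_{\min}(A|B)_{\rho|\sigma}$; $\bar F(\rho,\sigma)=\|\sqrt\rho\sqrt\sigma\|_1+\sqrt{(1-\mathrm{tr}\rho)(1-\mathrm{tr}\sigma)}$, $P=\sqrt{1-\bar F^2}$, $H^\varepsilon_{\min}(A|B)_\rho=\max\{H_{\min}(A|B)_{\tilde\rho}:\tilde\rho_{AB}\in\mathcal S_{\le}(AB),P(\rho_{AB},\tilde\rho_{AB})\le\varepsilon\}$. *)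

theory Defs
  imports "HOL-Analysis.Analysis"
begin

text \<open>Finite-dimensional operators on a Hilbert space whose computational basis is
  indexed by a finite type 'n, represented by their matrix entries.\<close>
type_synonym 'n qop = "'n \<Rightarrow> 'n \<Rightarrow> complex"

definition mmult :: "'n::finite qop \<Rightarrow> 'n qop \<Rightarrow> 'n qop" where
  "mmult A B = (\<lambda>i k. \<Sum>j\<in>UNIV. A i j * B j k)"

definition adj :: "'n qop \<Rightarrow> 'n qop" where
  "adj A = (\<lambda>i j. cnj (A j i))"

definition idop :: "'n qop" where
  "idop = (\<lambda>i j. if i = j then 1 else 0)"

definition smul :: "complex \<Rightarrow> 'n qop \<Rightarrow> 'n qop" where
  "smul c A = (\<lambda>i j. c * A i j)"

definition msub :: "'n qop \<Rightarrow> 'n qop \<Rightarrow> 'n qop" where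
  "msub A B = (\<lambda>i j. A i j - B i j)"

definition tr :: "'n::finite qop \<Rightarrow> complex" where
  "tr A = (\<Sum>i\<in>UNIV. A i i)"

text \<open>Positive (semidefinite) operator: nonnegative quadratic form (over \<complex> this
  includes hermiticity).\<close>
definition psd :: "'n::finite qop \<Rightarrow> bool" where
  "psd A \<longleftrightarrow> (\<forall>v::'n \<Rightarrow> complex.
      Im (\<Sum>i\<in>UNIV. \<Sum>j\<in>UNIV. cnj (v i) * A i j * v j) = 0 \<and>
      Re (\<Sum>i\<in>UNIV. \<Sum>j\<in>UNIV. cnj (v i) * A i j * v j) \<ge> 0)"

definition loewner_le :: "'n::finite qop \<Rightarrow> 'n qop \<Rightarrow> bool" where
  "loewner_le A B \<longleftrightarrow> psd (msub B A)"

definition density_op :: "'n::finite qop \<Rightarrow> bool" where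
  "density_op \<rho> \<longleftrightarrow> psd \<rho> \<and> tr \<rho> = 1"

definition subnormalized :: "'n::finite qop \<Rightarrow> bool" where
  "subnormalized \<rho> \<longleftrightarrow> psd \<rho> \<and> Re (tr \<rho>) \<le> 1"

definition unitary_op :: "'n::finite qop \<Rightarrow> bool" where
  "unitary_op U \<longleftrightarrow> mmult (adj U) U = idop \<and> mmult U (adj U) = idop"

definition msqrt :: "'n::finite qop \<Rightarrow> 'n qop" where
  "msqrt A = (THE S. psd S \<and> mmult S S = A)"

definition trace_norm :: "'n::finite qop \<Rightarrow> real" where
  "trace_norm X = Re (tr (msqrt (mmult (adj X) X)))"

definition tensor :: "'a qop \<Rightarrow> 'b qop \<Rightarrow> ('a \<times> 'b) qop" where
  "tensor A B = (\<lambda>(i, k) (j, l). A i j * B k l)"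

definition ptrace_fst :: "('a::finite \<times> 'b) qop \<Rightarrow> 'b qop" where
  "ptrace_fst X = (\<lambda>b b'. \<Sum>a\<in>UNIV. X (a, b) (a, b'))"

definition gen_fidelity :: "'n::finite qop \<Rightarrow> 'n qop \<Rightarrow> real" where
  "gen_fidelity \<rho> \<sigma> = trace_norm (mmult (msqrt \<rho>) (msqrt \<sigma>))
     + sqrt ((1 - Re (tr \<rho>)) * (1 - Re (tr \<sigma>)))"

definition purified_dist :: "'n::finite qop \<Rightarrow> 'n qop \<Rightarrow> real" where
  "purified_dist \<rho> \<sigma> = sqrt (1 - (gen_fidelity \<rho> \<sigma>)\<^sup>2)"

text \<open>Conditional min-entropies (base-2 logarithm), valued in the extended reals
  (Sup of the empty set is -\<infinity>; the maxima in the paper are attained).\<close>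
definition hmin_rel :: "('a::finite \<times> 'b::finite) qop \<Rightarrow> 'b qop \<Rightarrow> ereal" where
  "hmin_rel \<rho> \<sigma> = Sup {ereal l | l. loewner_le \<rho> (smul (complex_of_real (2 powr (- l))) (tensor idop \<sigma>))}"

definition hmin :: "('a::finite \<times> 'b::finite) qop \<Rightarrow> ereal" where
  "hmin \<rho> = Sup {hmin_rel \<rho> \<sigma> | \<sigma>. density_op \<sigma>}"

definition hmin_smooth :: "real \<Rightarrow> ('a::finite \<times> 'b::finite) qop \<Rightarrow> ereal" where
  "hmin_smooth \<epsilon> \<rho> = Sup {hmin \<rho>' | \<rho>'. subnormalized \<rho>' \<and> purified_dist \<rho> \<rho>' \<le> \<epsilon>}"

text \<open>The pinching T_{A\<rightarrow>A1} (A = A1 \<otimes> A2) applied as T \<otimes> id_E, followed by the identity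
  relabelling I_{A1\<rightarrow>K1}; K1 is represented by the same index type as A1.\<close>
definition pinch_relabel :: "((('a1::finite \<times> 'a2::finite) \<times> 'e) qop) \<Rightarrow> ('a1 \<times> 'e) qop" where
  "pinch_relabel X = (\<lambda>(k, e) (k', e'). if k = k' then (\<Sum>a2\<in>UNIV. X ((k, a2), e) ((k, a2), e')) else 0)"

text \<open>The measurement M^j_{A\<rightarrow>K1}(\<cdot>) = I_{A1\<rightarrow>K1}(T_{A\<rightarrow>A1}(U_j \<cdot> U_j^dagger)), applied as M \<otimes> id_E.\<close>
definition meas :: "('a1::finite \<times> 'a2::finite) qop \<Rightarrow> (('a1 \<times> 'a2) \<times> 'e::finite) qop \<Rightarrow> ('a1 \<times> 'e) qop" where
  "meas U X = pinch_relabel (mmult (tensor U idop) (mmult X (adj (tensor U idop))))"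

text \<open>rho_{K1 E J} = 1/L \<Sum>_j M^j(rho_AE) \<otimes> |j><j|_J, ordered as K1 \<otimes> (E \<otimes> J); L = CARD('j).\<close>
definition cq_state :: "('j::finite \<Rightarrow> ('k \<times> 'e) qop) \<Rightarrow> ('k \<times> ('e \<times> 'j)) qop" where
  "cq_state M = (\<lambda>(k, (e, j)) (k', (e', j')).
      if j = j' then M j (k, e) (k', e') / of_nat CARD('j) else 0)"

end

theory Submission
  imports Defs
begin

text \<open>Compare \<open>\<rho>\<^sub>K\<^sub>E\<^sub>J\<close> with the ideal state \<open>\<omega> = \<bbbI>/|K| \<otimes> \<rho>\<^sub>E \<otimes> \<bbbI>/L\<close>. Since
  \<open>\<omega> = 2\<^sup>-\<^sup>l \<bbbI> \<otimes> \<omega>\<^sub>E\<^sub>J\<close> with \<open>l = log |K|\<close>, we have \<open>H\<^sub>m\<^sub>i\<^sub>n(K|EJ)\<^sub>\<omega> \<ge> log |K|\<close>. Both states are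
  block diagonal in \<open>J\<close>, so \<open>\<parallel>\<rho>\<^sub>K\<^sub>E\<^sub>J - \<omega>\<parallel>\<^sub>1\<close> is exactly the averaged distance of the hypothesis,
  hence at most \<open>\<epsilon>\<close>. The Fuchs--van de Graaf bound \<open>F \<ge> 1 - \<parallel>\<rho> - \<omega>\<parallel>\<^sub>1/2\<close>, obtained from the
  Powers--Stormer inequality, turns this into purified distance at most \<open>sqrt (2\<epsilon>)\<close>, so \<open>\<omega>\<close>
  is admissible in the smoothing.\<close>

definition mat_vec :: "'n::finite qop \<Rightarrow> ('n \<Rightarrow> complex) \<Rightarrow> ('n \<Rightarrow> complex)" where
  "mat_vec A v = (\<lambda>i. \<Sum>j\<in>UNIV. A i j * v j)"

definition vinner :: "('n::finite \<Rightarrow> complex) \<Rightarrow> ('n \<Rightarrow> complex) \<Rightarrow> complex" where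
  "vinner u v = (\<Sum>i\<in>UNIV. cnj (u i) * v i)"

definition qform :: "'n::finite qop \<Rightarrow> ('n \<Rightarrow> complex) \<Rightarrow> complex" where
  "qform A v = (\<Sum>i\<in>UNIV. \<Sum>j\<in>UNIV. cnj (v i) * A i j * v j)"

lemma qform_eq_vinner: "qform A v = vinner v (mat_vec A v)"
  unfolding qform_def vinner_def mat_vec_def by (simp add: sum_distrib_left mult.assoc)

lemma mmult_assoc: "mmult (mmult A B) C = mmult A (mmult B C)"
  unfolding mmult_def
  by (auto simp: sum_distrib_left sum_distrib_right mult.assoc intro!: ext sum.swap[THEN trans])

lemma mmult_id_left[simp]: "mmult idop A = A"
proof -
  have "(\<Sum>j\<in>UNIV. (if i = j then 1 else 0) * A j k) = (\<Sum>j\<in>UNIV. if i = j then A j k else 0)" for i k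
    by (rule sum.cong) auto
  hence "(\<Sum>j\<in>UNIV. (if i = j then 1 else 0) * A j k) = A i k" for i k by simp
  thus ?thesis unfolding mmult_def idop_def by (auto intro!: ext)
qed

lemma mmult_id_right[simp]: "mmult A idop = A"
proof -
  have "(\<Sum>j\<in>UNIV. A i j * (if j = k then 1 else 0)) = A i k" for i k
    by (simp add: if_distrib cong: if_cong)
  thus ?thesis unfolding mmult_def idop_def by (auto intro!: ext)
qed

lemma adj_adj[simp]: "adj (adj A) = A" unfolding adj_def by auto

lemma adj_mmult: "adj (mmult A B) = mmult (adj B) (adj A)"
  unfolding adj_def mmult_def by (auto intro!: ext simp: mult.commute)

lemma adj_id[simp]: "adj idop = idop" unfolding adj_def idop_def by (auto intro!: ext)

lemma tr_mmult_comm: "tr (mmult A B) = tr (mmult B A)"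
  unfolding tr_def mmult_def by (subst sum.swap) (simp add: mult.commute)

lemma mat_vec_mmult: "mat_vec (mmult A B) v = mat_vec A (mat_vec B v)"
  unfolding mat_vec_def mmult_def
  by (auto intro!: ext simp: sum_distrib_left sum_distrib_right mult.assoc intro: sum.swap[THEN trans])

lemma vinner_adj: "vinner u (mat_vec A v) = vinner (mat_vec (adj A) u) v"
  unfolding vinner_def mat_vec_def adj_def
  by (auto simp: sum_distrib_left sum_distrib_right mult.assoc mult.left_commute intro: sum.swap[THEN trans])

lemma mmult_left_right_inverse:
  fixes A B :: "'n::finite qop"
  assumes "mmult A B = idop" shows "mmult B A = idop"
proof -
  let ?M = "\<lambda>X::'n qop. (\<chi> i j. X i j) :: complex^'n^'n"
  have h: "?M (mmult X Y) = ?M X ** ?M Y" for X Y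
    unfolding mmult_def matrix_matrix_mult_def by simp
  have i: "?M idop = mat 1" unfolding idop_def mat_def by (simp add: vec_eq_iff)
  have "?M A ** ?M B = mat 1" using assms h i by metis
  hence "?M B ** ?M A = mat 1" using matrix_left_right_inverse by blast
  hence "?M (mmult B A) = ?M idop" using h i by metis
  thus ?thesis by (auto simp: vec_eq_iff fun_eq_iff)
qed

lemma vinner_add_right: "vinner u (\<lambda>i. v i + w i) = vinner u v + vinner u w"
  unfolding vinner_def by (simp add: distrib_left sum.distrib)

lemma vinner_diff_right: "vinner u (\<lambda>i. v i - w i) = vinner u v - vinner u w"
  unfolding vinner_def by (simp add: right_diff_distrib sum_subtractf)

lemma vinner_scale_right: "vinner u (\<lambda>i. c * v i) = c * vinner u v"
  unfolding vinner_def by (simp add: sum_distrib_left mult.left_commute)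

lemma vinner_add_left: "vinner (\<lambda>i. v i + w i) u = vinner v u + vinner w u"
  unfolding vinner_def by (simp add: distrib_right sum.distrib)

lemma vinner_diff_left: "vinner (\<lambda>i. v i - w i) u = vinner v u - vinner w u"
  unfolding vinner_def by (simp add: left_diff_distrib sum_subtractf)

lemma vinner_scale_left: "vinner (\<lambda>i. c * v i) u = cnj c * vinner v u"
  unfolding vinner_def by (simp add: sum_distrib_left mult.assoc)

lemma vinner_sym: "vinner v u = cnj (vinner u v)"
  unfolding vinner_def by (simp add: mult.commute)

lemma vinner_self_real: "vinner u u = of_real (\<Sum>i\<in>UNIV. (cmod (u i))^2)"
  unfolding vinner_def of_real_sum by (rule sum.cong) (auto simp: complex_norm_square[symmetric] mult.commute simp del: of_real_power)

lemma vinner_self_ge0: "Re (vinner u u) \<ge> 0"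
  unfolding vinner_self_real by (simp add: sum_nonneg)

lemma vinner_self_Im: "Im (vinner u u) = 0"
  unfolding vinner_self_real by simp

lemma vinner_self_eq0: "vinner u u = 0 \<longleftrightarrow> u = (\<lambda>i. 0)"
proof
  assume "vinner u u = 0"
  hence "(\<Sum>i\<in>UNIV. (cmod (u i))^2) = 0" unfolding vinner_self_real by (simp only: of_real_eq_0_iff)
  hence "\<forall>i\<in>UNIV. (cmod (u i))^2 = 0" by (subst (asm) sum_nonneg_eq_0_iff) auto
  thus "u = (\<lambda>i. 0)" by auto
qed (simp add: vinner_def)

lemma vinner_zero_right[simp]: "vinner u (\<lambda>i. 0) = 0" by (simp add: vinner_def)

lemma vinner_zero_left[simp]: "vinner (\<lambda>i. 0) u = 0" by (simp add: vinner_def)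

lemma mat_vec_add: "mat_vec A (\<lambda>i. v i + w i) = (\<lambda>i. mat_vec A v i + mat_vec A w i)"
  unfolding mat_vec_def by (simp add: distrib_left sum.distrib)

lemma mat_vec_scale: "mat_vec A (\<lambda>i. c * v i) = (\<lambda>i. c * mat_vec A v i)"
  unfolding mat_vec_def by (simp add: sum_distrib_left mult.left_commute)

definition hermitian :: "'n::finite qop \<Rightarrow> bool" where "hermitian A \<longleftrightarrow> adj A = A"

lemma hermitian_vinner_swap: "hermitian A \<Longrightarrow> vinner u (mat_vec A v) = vinner (mat_vec A u) v"
  unfolding hermitian_def by (metis vinner_adj)

lemma hermitian_rayleigh_real: "hermitian A \<Longrightarrow> Im (vinner u (mat_vec A u)) = 0"
proof -
  assume "hermitian A"
  hence "vinner u (mat_vec A u) = cnj (vinner u (mat_vec A u))" using hermitian_vinner_swap vinner_sym by metis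
  hence "Im (vinner u (mat_vec A u)) = - Im (vinner u (mat_vec A u))" by (metis complex_cnj_cancel_iff cnj.sel(2))
  thus ?thesis by simp
qed

definition unit_vec :: "'n \<Rightarrow> 'n \<Rightarrow> complex" where "unit_vec i = (\<lambda>k. if k = i then 1 else 0)"

lemma vinner_unit_vec_left: "vinner (unit_vec i) u = u i"
proof -
  have "vinner (unit_vec i) u = (\<Sum>k\<in>UNIV. if k = i then u k else 0)" unfolding vinner_def unit_vec_def by (rule sum.cong) auto
  thus ?thesis by simp
qed

lemma mat_vec_unit_vec: "mat_vec A (unit_vec j) = (\<lambda>i. A i j)"
proof -
  have "mat_vec A (unit_vec j) i = (\<Sum>k\<in>UNIV. if k = j then A i k else 0)" for i unfolding mat_vec_def unit_vec_def by (rule sum.cong) auto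
  thus ?thesis by auto
qed

lemma rayleigh_add: "vinner (\<lambda>k. x k + y k) (mat_vec A (\<lambda>k. x k + y k)) = vinner x (mat_vec A x) + vinner y (mat_vec A y) + vinner x (mat_vec A y) + vinner y (mat_vec A x)"
  by (simp add: mat_vec_add vinner_add_left vinner_add_right)

text \<open>Polarization: reality of the form at \<open>e\<^sub>i + e\<^sub>j\<close> and at \<open>e\<^sub>i + \<i> e\<^sub>j\<close> makes \<open>A i j + A j i\<close>
  real and \<open>A i j - A j i\<close> imaginary.\<close>
lemma psd_hermitian: assumes "psd A" shows "hermitian A"
proof -
  have P: "Im (vinner v (mat_vec A v)) = 0" for v
  proof -
    have "Im (qform A v) = 0" using assms unfolding psd_def qform_def by blast
    thus ?thesis by (simp add: qform_eq_vinner)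
  qed
  have d: "Im (A i i) = 0" for i using P[of "unit_vec i"] by (simp add: mat_vec_unit_vec vinner_unit_vec_left)
  have "A j i = cnj (A i j)" for i j
  proof -
    have 1: "Im (A i j + A j i) = 0"
    proof -
      have "vinner (\<lambda>k. unit_vec i k + unit_vec j k) (mat_vec A (\<lambda>k. unit_vec i k + unit_vec j k)) = A i i + A j j + A i j + A j i"
        unfolding rayleigh_add by (simp only: mat_vec_unit_vec vinner_unit_vec_left)
      thus ?thesis using P[of "\<lambda>k. unit_vec i k + unit_vec j k"] d[of i] d[of j] by simp
    qed
    have 2: "Im (\<i> * A i j - \<i> * A j i) = 0"
    proof -
      have "vinner (\<lambda>k. unit_vec i k + \<i> * unit_vec j k) (mat_vec A (\<lambda>k. unit_vec i k + \<i> * unit_vec j k)) = A i i + cnj \<i> * (\<i> * A j j) + \<i> * A i j + cnj \<i> * A j i"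
        unfolding rayleigh_add by (simp only: mat_vec_unit_vec vinner_unit_vec_left mat_vec_scale vinner_scale_left vinner_scale_right)
      thus ?thesis using P[of "\<lambda>k. unit_vec i k + \<i> * unit_vec j k"] d[of i] d[of j] by simp
    qed
    from 1 2 show ?thesis by (simp add: complex_eq_iff)
  qed
  hence "cnj (A j i) = A i j" for i j by (metis complex_cnj_cnj)
  thus ?thesis unfolding hermitian_def adj_def by (intro ext) metis
qed

section \<open>The spectral theorem for Hermitian matrices\<close>

lemma vinner_sum_right: "vinner u (\<lambda>i. \<Sum>l\<in>K. c l * f l i) = (\<Sum>l\<in>K. c l * vinner u (f l))"
  unfolding vinner_def by (simp add: sum_distrib_left mult.left_commute sum.swap[of _ UNIV])

lemma exists_orthogonal_nonzero:
  fixes e :: "'n::finite \<Rightarrow> 'n \<Rightarrow> complex"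
  assumes K: "K \<noteq> UNIV" and on: "\<forall>k\<in>K. \<forall>l\<in>K. vinner (e k) (e l) = (if k = l then 1 else 0)"
  shows "\<exists>w. w \<noteq> (\<lambda>i. 0) \<and> (\<forall>k\<in>K. vinner (e k) w = 0)"
proof -
  define S where "S = (\<lambda>k. vec_lambda (e k) :: complex^'n) ` K"
  have "card K < CARD('n)" using K by (metis finite psubset_card_mono subset_UNIV psubsetI)
  hence cS: "card S < CARD('n)" unfolding S_def by (meson card_image_le finite le_less_trans)
  have "vec.span S \<noteq> UNIV"
  proof
    assume "vec.span S = UNIV"
    hence "vec.dim (UNIV :: (complex^'n) set) \<le> card S"
      by (intro vec.dim_le_card) (auto simp: S_def)
    thus False using cS vec_dim_card by (metis not_le)
  qed
  then obtain x where x: "x \<notin> vec.span S" by auto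
  define c where "c k = vinner (e k) (vec_nth x)" for k
  define w where "w = (\<lambda>i. x $ i - (\<Sum>l\<in>K. c l * e l i))"
  have "w \<noteq> (\<lambda>i. 0)"
  proof
    assume "w = (\<lambda>i. 0)"
    hence "x = (\<Sum>l\<in>K. c l *s vec_lambda (e l))" unfolding w_def
      by (auto simp: vec_eq_iff fun_eq_iff sum_component)
    moreover have "(\<Sum>l\<in>K. c l *s vec_lambda (e l)) \<in> vec.span S"
      unfolding S_def by (intro vec.span_sum vec.span_scale vec.span_base) auto
    ultimately show False using x by simp
  qed
  moreover have "\<forall>k\<in>K. vinner (e k) w = 0"
  proof
    fix k assume k: "k \<in> K"
    have "vinner (e k) w = c k - (\<Sum>l\<in>K. c l * vinner (e k) (e l))"
      unfolding w_def vinner_diff_right vinner_sum_right c_def by simp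
    also have "(\<Sum>l\<in>K. c l * vinner (e k) (e l)) = (\<Sum>l\<in>K. if l = k then c l else 0)"
      using on k by (intro sum.cong) auto
    also have "\<dots> = c k" using k by simp
    finally show "vinner (e k) w = 0" by simp
  qed
  ultimately show ?thesis by blast
qed

lemma norm_vec_vinner: "norm (x :: complex^'n::finite) = sqrt (Re (vinner (vec_nth x) (vec_nth x)))"
  unfolding norm_vec_def L2_set_def vinner_self_real by simp

lemma continuous_on_vinner: "continuous_on A (\<lambda>x::complex^'n::finite. vinner u (vec_nth x))"
  unfolding vinner_def by (intro continuous_intros continuous_on_component continuous_on_id)

lemma continuous_on_rayleigh: "continuous_on A (\<lambda>x::complex^'n::finite. Re (vinner (vec_nth x) (mat_vec H (vec_nth x))))"
  unfolding vinner_def mat_vec_def by (intro continuous_intros continuous_on_component continuous_on_id)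

lemma rayleigh_scale: "vinner (\<lambda>i. of_real c * u i) (mat_vec H (\<lambda>i. of_real c * u i)) = of_real (c^2) * vinner u (mat_vec H u)"
  by (simp add: mat_vec_scale vinner_scale_left vinner_scale_right power2_eq_square)

lemma vinner_self_scale: "vinner (\<lambda>i. of_real c * u i) (\<lambda>i. of_real c * u i) = of_real (c^2) * vinner u u"
  by (simp add: vinner_scale_left vinner_scale_right power2_eq_square)

lemma vinner_self_pos: "u \<noteq> (\<lambda>i. 0) \<Longrightarrow> Re (vinner u u) > 0"
  using vinner_self_ge0[of u] vinner_self_eq0[of u] vinner_self_Im[of u]
  by (cases "Re (vinner u u) = 0") (auto simp: complex_eq_iff)

lemma vinner_normalize:
  assumes "u \<noteq> (\<lambda>i. 0)"
  shows "Re (vinner (\<lambda>i. of_real (1 / sqrt (Re (vinner u u))) * u i) (\<lambda>i. of_real (1 / sqrt (Re (vinner u u))) * u i)) = 1"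
  unfolding vinner_self_scale using vinner_self_pos[OF assms] by (simp add: power_divide)

lemma exists_rayleigh_maximizer:
  fixes e :: "'n::finite \<Rightarrow> 'n \<Rightarrow> complex" and H :: "'n qop"
  assumes w: "w \<noteq> (\<lambda>i. 0)" "\<forall>k\<in>K. vinner (e k) w = 0"
  shows "\<exists>v. (\<forall>k\<in>K. vinner (e k) v = 0) \<and> vinner v v = 1 \<and>
     (\<forall>u. (\<forall>k\<in>K. vinner (e k) u = 0) \<longrightarrow> Re (vinner u (mat_vec H u)) \<le> Re (vinner v (mat_vec H v)) * Re (vinner u u))"
proof -
  define C where "C = {x::complex^'n. norm x = 1 \<and> (\<forall>k\<in>K. vinner (e k) (vec_nth x) = 0)}"
  have C_eq: "C = sphere 0 1 \<inter> (\<Inter>k\<in>K. {x. vinner (e k) (vec_nth x) = 0})"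
    unfolding C_def by auto
  have "compact C" unfolding C_eq
    by (intro compact_Int_closed compact_sphere closed_INT ballI closed_Collect_eq continuous_on_vinner continuous_on_const)
  have norm1: "vec_lambda (\<lambda>i. of_real (1 / sqrt (Re (vinner u u))) * u i) \<in> C"
    if "u \<noteq> (\<lambda>i. 0)" "\<forall>k\<in>K. vinner (e k) u = 0" for u
  proof -
    have "\<forall>k\<in>K. vinner (e k) (\<lambda>i. of_real (1 / sqrt (Re (vinner u u))) * u i) = 0"
      using that(2) by (simp only: vinner_scale_right) simp
    thus ?thesis using vinner_normalize[OF that(1)] unfolding C_def norm_vec_vinner
      by (simp add: vec_lambda_inverse)
  qed
  have "C \<noteq> {}" using norm1[OF w] by auto
  from continuous_attains_sup[OF \<open>compact C\<close> this continuous_on_rayleigh[of C H]]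
  obtain x where x: "x \<in> C" and xmax: "\<forall>y\<in>C. Re (vinner (vec_nth y) (mat_vec H (vec_nth y))) \<le> Re (vinner (vec_nth x) (mat_vec H (vec_nth x)))"
    by blast
  define v where "v = vec_nth x"
  have v1: "vinner v v = 1"
  proof -
    have "Re (vinner v v) = 1" using x unfolding C_def norm_vec_vinner v_def by simp
    thus ?thesis using vinner_self_Im[of v] by (simp add: complex_eq_iff)
  qed
  have vK: "\<forall>k\<in>K. vinner (e k) v = 0" using x unfolding C_def v_def by simp
  have "Re (vinner u (mat_vec H u)) \<le> Re (vinner v (mat_vec H v)) * Re (vinner u u)" if uK: "\<forall>k\<in>K. vinner (e k) u = 0" for u
  proof (cases "u = (\<lambda>i. 0)")
    case True thus ?thesis by (simp add: mat_vec_def)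
  next
    case False
    have inC: "vec_lambda (\<lambda>i. of_real (1 / sqrt (Re (vinner u u))) * u i) \<in> C"
      and pos: "Re (vinner u u) > 0" using norm1[OF False uK] vinner_self_pos[OF False] by auto
    from xmax inC have "Re (vinner (\<lambda>i. of_real (1 / sqrt (Re (vinner u u))) * u i) (mat_vec H (\<lambda>i. of_real (1 / sqrt (Re (vinner u u))) * u i))) \<le> Re (vinner v (mat_vec H v))"
      unfolding v_def by (metis (no_types, lifting) vec_lambda_inverse UNIV_I)
    hence "Re (of_real ((1 / sqrt (Re (vinner u u)))^2) * vinner u (mat_vec H u)) \<le> Re (vinner v (mat_vec H v))"
      by (simp only: rayleigh_scale)
    hence "Re (vinner u (mat_vec H u)) / Re (vinner u u) \<le> Re (vinner v (mat_vec H v))" using pos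
      by (simp add: power_divide)
    thus ?thesis using pos by (simp add: divide_le_eq)
  qed
  thus ?thesis using v1 vK by blast
qed

lemma linear_coeff_eq_0_if_quadratic_nonpos: fixes a b :: real assumes "\<forall>t. 2*t*a + t^2*b \<le> 0" shows "a = 0"
proof (rule ccontr)
  assume a: "a \<noteq> 0"
  define c where "c = \<bar>b\<bar> + 1"
  have c: "c > 0" unfolding c_def by simp
  have "2*(a/c)*a + (a/c)^2*b \<le> 0" using assms by blast
  hence "(2*c + b) * a^2 / c^2 \<le> 0" using c by (simp add: field_simps power2_eq_square)
  moreover have "(2*c + b) * a^2 / c^2 > 0" using a c unfolding c_def by (intro divide_pos_pos mult_pos_pos) auto
  ultimately show False by simp
qed

text \<open>First-order condition at a maximizer \<open>v\<close> of the Rayleigh quotient: the quadratic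
  \<open>t \<mapsto> R(v + t w)\<close> with \<open>w \<perp> v\<close> is maximal at \<open>t = 0\<close>, so its linear coefficient vanishes.\<close>
lemma rayleigh_maximizer_stationary:
  fixes e :: "'n::finite \<Rightarrow> 'n \<Rightarrow> complex" and H :: "'n qop"
  assumes H: "hermitian H"
    and vK: "\<forall>k\<in>K. vinner (e k) v = 0" and v1: "vinner v v = 1"
    and mx: "\<forall>u. (\<forall>k\<in>K. vinner (e k) u = 0) \<longrightarrow> Re (vinner u (mat_vec H u)) \<le> Re (vinner v (mat_vec H v)) * Re (vinner u u)"
    and wK: "\<forall>k\<in>K. vinner (e k) w = 0" and vw: "vinner v w = 0"
  shows "vinner w (mat_vec H v) = 0"
proof -
  define \<mu> where "\<mu> = Re (vinner v (mat_vec H v))"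
  have Re0: "Re (vinner w (mat_vec H v)) = 0" if wK: "\<forall>k\<in>K. vinner (e k) w = 0" and vw: "vinner v w = 0" for w
  proof -
    define a where "a = Re (vinner w (mat_vec H v))"
    define b where "b = Re (vinner w (mat_vec H w)) - \<mu> * Re (vinner w w)"
    have wv: "vinner w v = 0" using vw vinner_sym[of w v] by simp
    have "2*t*a + t^2*b \<le> 0" for t
    proof -
      let ?u = "\<lambda>i. v i + of_real t * w i"
      have uK: "\<forall>k\<in>K. vinner (e k) ?u = 0" using vK wK by (simp add: vinner_add_right vinner_scale_right)
      have q: "vinner ?u (mat_vec H ?u) = vinner v (mat_vec H v) + of_real (t^2) * vinner w (mat_vec H w) + of_real t * vinner v (mat_vec H w) + of_real t * vinner w (mat_vec H v)"
        unfolding rayleigh_add by (simp add: mat_vec_scale vinner_scale_left vinner_scale_right power2_eq_square)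
      have s: "vinner v (mat_vec H w) = cnj (vinner w (mat_vec H v))" using hermitian_vinner_swap[OF H] vinner_sym by metis
      have Q: "Re (vinner ?u (mat_vec H ?u)) = \<mu> + t^2 * Re (vinner w (mat_vec H w)) + 2 * t * a"
        unfolding q s a_def \<mu>_def by simp
      have n: "Re (vinner ?u ?u) = 1 + t^2 * Re (vinner w w)"
        using v1 vw wv by (simp add: vinner_add_left vinner_add_right vinner_scale_left vinner_scale_right power2_eq_square)
      from mx uK have "Re (vinner ?u (mat_vec H ?u)) \<le> \<mu> * Re (vinner ?u ?u)" unfolding \<mu>_def by blast
      thus ?thesis unfolding Q n b_def by (simp add: algebra_simps)
    qed
    thus ?thesis using linear_coeff_eq_0_if_quadratic_nonpos a_def by blast
  qed
  have "Re (vinner (\<lambda>i. \<i> * w i) (mat_vec H v)) = 0" using wK vw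
    by (intro Re0) (simp_all add: vinner_scale_right)
  hence "Im (vinner w (mat_vec H v)) = 0" by (simp add: vinner_scale_left)
  with Re0[OF wK vw] show ?thesis by (simp add: complex_eq_iff)
qed

lemma rayleigh_maximizer_eigenvector:
  fixes e :: "'n::finite \<Rightarrow> 'n \<Rightarrow> complex" and H :: "'n qop"
  assumes H: "hermitian H"
    and eig: "\<forall>k\<in>K. mat_vec H (e k) = (\<lambda>i. of_real (d k) * e k i)"
    and vK: "\<forall>k\<in>K. vinner (e k) v = 0" and v1: "vinner v v = 1"
    and mx: "\<forall>u. (\<forall>k\<in>K. vinner (e k) u = 0) \<longrightarrow> Re (vinner u (mat_vec H u)) \<le> Re (vinner v (mat_vec H v)) * Re (vinner u u)"
  shows "mat_vec H v = (\<lambda>i. of_real (Re (vinner v (mat_vec H v))) * v i)"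
proof -
  define \<mu> where "\<mu> = Re (vinner v (mat_vec H v))"
  define r where "r = (\<lambda>i. mat_vec H v i - of_real \<mu> * v i)"
  have rK: "\<forall>k\<in>K. vinner (e k) r = 0"
  proof
    fix k assume k: "k \<in> K"
    have "vinner (e k) (mat_vec H v) = vinner (mat_vec H (e k)) v" using hermitian_vinner_swap[OF H] by metis
    also have "\<dots> = of_real (d k) * vinner (e k) v" using eig k by (simp add: vinner_scale_left)
    finally show "vinner (e k) r = 0" unfolding r_def vinner_diff_right vinner_scale_right using vK k by simp
  qed
  have "vinner v (mat_vec H v) = of_real \<mu>" unfolding \<mu>_def using hermitian_rayleigh_real[OF H, of v] by (simp add: complex_eq_iff)
  hence vr: "vinner v r = 0" unfolding r_def vinner_diff_right vinner_scale_right using v1 by simp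
  have "vinner r (mat_vec H v) = 0" by (rule rayleigh_maximizer_stationary[OF H vK v1 mx rK vr])
  moreover have "vinner r v = 0" using vr vinner_sym[of r v] by simp
  moreover have eq: "(\<lambda>i. mat_vec H v i - of_real \<mu> * v i) = r" by (simp add: r_def)
  moreover have "vinner r (\<lambda>i. mat_vec H v i - of_real \<mu> * v i) = vinner r (mat_vec H v) - of_real \<mu> * vinner r v"
    by (simp only: vinner_diff_right vinner_scale_right)
  ultimately have "vinner r r = 0" by simp
  hence "r = (\<lambda>i. 0)" by (simp add: vinner_self_eq0)
  thus ?thesis unfolding r_def \<mu>_def by (auto simp: fun_eq_iff)
qed

text \<open>Each new eigenvector maximizes the Rayleigh quotient on the orthogonal complement of the
  previous ones.\<close>
lemma hermitian_orthonormal_eigenvectors: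
  fixes H :: "'n::finite qop"
  assumes H: "hermitian H"
  shows "\<exists>(e::'n \<Rightarrow> 'n \<Rightarrow> complex) d. (\<forall>k\<in>K. \<forall>l\<in>K. vinner (e k) (e l) = (if k = l then 1 else 0)) \<and>
           (\<forall>k\<in>K. mat_vec H (e k) = (\<lambda>i. of_real (d k) * e k i))"
proof (induction K rule: finite_induct[OF finite])
  case 1 show ?case by simp
next
  case (2 x F)
  then obtain e d where on: "\<forall>k\<in>F. \<forall>l\<in>F. vinner (e k) (e l) = (if k = l then 1 else 0)"
    and eig: "\<forall>k\<in>F. mat_vec H (e k) = (\<lambda>i. of_real (d k) * e k i)" by blast
  have "F \<noteq> UNIV" using 2 by auto
  from exists_orthogonal_nonzero[OF this on] obtain w where "w \<noteq> (\<lambda>i. 0)" "\<forall>k\<in>F. vinner (e k) w = 0" by blast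
  from exists_rayleigh_maximizer[OF this, of H] obtain v where vK: "\<forall>k\<in>F. vinner (e k) v = 0" and v1: "vinner v v = 1"
    and mx: "\<forall>u. (\<forall>k\<in>F. vinner (e k) u = 0) \<longrightarrow> Re (vinner u (mat_vec H u)) \<le> Re (vinner v (mat_vec H v)) * Re (vinner u u)"
    by blast
  have v_eigen: "mat_vec H v = (\<lambda>i. of_real (Re (vinner v (mat_vec H v))) * v i)" by (rule rayleigh_maximizer_eigenvector[OF H eig vK v1 mx])
  define e' where "e' = e(x := v)"
  define d' where "d' = d(x := Re (vinner v (mat_vec H v)))"
  have "\<forall>k\<in>insert x F. \<forall>l\<in>insert x F. vinner (e' k) (e' l) = (if k = l then 1 else 0)"
  proof -
    have "\<forall>k\<in>F. vinner v (e k) = 0" using vK by (metis vinner_sym complex_cnj_zero)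
    thus ?thesis using on vK v1 2(2) unfolding e'_def by auto
  qed
  moreover have "\<forall>k\<in>insert x F. mat_vec H (e' k) = (\<lambda>i. of_real (d' k) * e' k i)"
    using eig v_eigen 2(2) unfolding e'_def d'_def by auto
  ultimately show ?case by blast
qed

definition diag_op :: "('n \<Rightarrow> complex) \<Rightarrow> 'n qop" where "diag_op f = (\<lambda>i j. if i = j then f i else 0)"

lemma mmult_diag_op_right: "mmult A (diag_op f) = (\<lambda>i k. A i k * f k)"
proof -
  have "(\<Sum>j\<in>UNIV. A i j * (if j = k then f j else 0)) = (\<Sum>j\<in>UNIV. if j = k then A i k * f k else 0)" for i k
    by (rule sum.cong) auto
  thus ?thesis unfolding mmult_def diag_op_def by (auto intro!: ext)
qed

lemma mmult_diag_op_left: "mmult (diag_op f) A = (\<lambda>i k. f i * A i k)"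
proof -
  have "(\<Sum>j\<in>UNIV. (if i = j then f i else 0) * A j k) = (\<Sum>j\<in>UNIV. if j = i then f i * A i k else 0)" for i k
    by (rule sum.cong) auto
  thus ?thesis unfolding mmult_def diag_op_def by (auto intro!: ext)
qed

theorem hermitian_spectral:
  fixes H :: "'n::finite qop"
  assumes H: "hermitian H"
  shows "\<exists>E d. unitary_op E \<and> H = mmult E (mmult (diag_op (\<lambda>i. of_real (d i))) (adj E))"
proof -
  obtain e :: "'n \<Rightarrow> 'n \<Rightarrow> complex" and d where on: "\<forall>k l. vinner (e k) (e l) = (if k = l then 1 else 0)"
    and eig: "\<forall>k. mat_vec H (e k) = (\<lambda>i. of_real (d k) * e k i)"
    using hermitian_orthonormal_eigenvectors[OF H, of UNIV] by (metis UNIV_I)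
  define E where "E = (\<lambda>i k. e k i)"
  have 1: "mmult (adj E) E = idop"
    using on unfolding mmult_def adj_def E_def idop_def vinner_def by (auto intro!: ext)
  hence 2: "mmult E (adj E) = idop" by (rule mmult_left_right_inverse)
  have HE: "mmult H E = mmult E (diag_op (\<lambda>i. of_real (d i)))"
    unfolding mmult_diag_op_right using eig unfolding mmult_def E_def mat_vec_def
    by (auto intro!: ext simp: fun_eq_iff mult.commute)
  have "H = mmult (mmult H E) (adj E)" by (simp add: mmult_assoc 2)
  also have "\<dots> = mmult E (mmult (diag_op (\<lambda>i. of_real (d i))) (adj E))" by (simp add: HE mmult_assoc)
  finally show ?thesis using 1 2 unfolding unitary_op_def by blast
qed

lemma rayleigh_diag_op: "vinner u (mat_vec (diag_op (\<lambda>i. of_real (f i))) u) = of_real (\<Sum>i\<in>UNIV. f i * (cmod (u i))^2)"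
proof -
  have "mat_vec (diag_op (\<lambda>i. of_real (f i))) u = (\<lambda>i. of_real (f i) * u i)"
  proof
    fix i
    have "(\<Sum>j\<in>UNIV. (if i = j then complex_of_real (f i) else 0) * u j) = (\<Sum>j\<in>UNIV. if j = i then complex_of_real (f i) * u i else 0)"
      by (rule sum.cong) auto
    thus "mat_vec (diag_op (\<lambda>i. of_real (f i))) u i = of_real (f i) * u i" unfolding mat_vec_def diag_op_def by simp
  qed
  moreover have "cnj (u i) * (of_real (f i) * u i) = of_real (f i * (cmod (u i))^2)" for i
  proof -
    have "cnj (u i) * (of_real (f i) * u i) = of_real (f i) * (u i * cnj (u i))" by (simp add: ac_simps)
    also have "\<dots> = of_real (f i) * of_real ((cmod (u i))^2)" by (simp only: complex_norm_square)
    finally show ?thesis by simp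
  qed
  ultimately show ?thesis unfolding vinner_def of_real_sum by (simp only:)
qed

lemma psd_unitary_conj_diag_op:
  assumes "\<forall>i. f i \<ge> 0"
  shows "psd (mmult E (mmult (diag_op (\<lambda>i. of_real (f i))) (adj E)))"
  unfolding psd_def
proof
  fix v
  have "(\<Sum>i\<in>UNIV. \<Sum>j\<in>UNIV. cnj (v i) * mmult E (mmult (diag_op (\<lambda>i. of_real (f i))) (adj E)) i j * v j)
     = vinner (mat_vec (adj E) v) (mat_vec (diag_op (\<lambda>i. of_real (f i))) (mat_vec (adj E) v))"
    unfolding qform_def[symmetric] qform_eq_vinner mat_vec_mmult vinner_adj by simp
  also have "\<dots> = of_real (\<Sum>i\<in>UNIV. f i * (cmod (mat_vec (adj E) v i))^2)" by (rule rayleigh_diag_op)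
  finally show "Im (\<Sum>i\<in>UNIV. \<Sum>j\<in>UNIV. cnj (v i) * mmult E (mmult (diag_op (\<lambda>i. of_real (f i))) (adj E)) i j * v j) = 0 \<and>
    0 \<le> Re (\<Sum>i\<in>UNIV. \<Sum>j\<in>UNIV. cnj (v i) * mmult E (mmult (diag_op (\<lambda>i. of_real (f i))) (adj E)) i j * v j)"
    using assms by (simp add: sum_nonneg)
qed

lemma psd_spectral:
  fixes A :: "'n::finite qop"
  assumes "psd A"
  shows "\<exists>E f. unitary_op E \<and> (\<forall>i. f i \<ge> 0) \<and> A = mmult E (mmult (diag_op (\<lambda>i. of_real (f i))) (adj E))"
proof -
  obtain E f where U: "unitary_op E" and A: "A = mmult E (mmult (diag_op (\<lambda>i. of_real (f i))) (adj E))"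
    using hermitian_spectral[OF psd_hermitian[OF assms]] by blast
  have "f k \<ge> 0" for k
  proof -
    have "mmult (adj E) (mmult A E) = diag_op (\<lambda>i. of_real (f i))"
      using U unfolding A unitary_op_def by (simp add: mmult_assoc flip: mmult_assoc[of "adj E" E])
    hence "of_real (f k) = mmult (adj E) (mmult A E) k k" unfolding diag_op_def by (metis)
    also have "\<dots> = qform A (\<lambda>i. E i k)" unfolding mmult_def adj_def qform_def
      by (simp add: sum_distrib_left sum_distrib_right mult.assoc mult.commute mult.left_commute)
    finally have "of_real (f k) = qform A (\<lambda>i. E i k)" .
    moreover have "Re (qform A (\<lambda>i. E i k)) \<ge> 0" using assms[unfolded psd_def, rule_format, of "\<lambda>i. E i k"] unfolding qform_def by simp
    ultimately show ?thesis by (metis Re_complex_of_real)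
  qed
  thus ?thesis using U A by blast
qed

section \<open>Positive square roots\<close>

lemma mmult_diag_op: "mmult (diag_op a) (diag_op b) = diag_op (\<lambda>i. a i * b i)"
  unfolding mmult_diag_op_right by (auto simp: diag_op_def fun_eq_iff)

lemma mmult_unitary_conj:
  assumes "unitary_op E"
  shows "mmult (mmult E (mmult D (adj E))) (mmult E (mmult D' (adj E))) = mmult E (mmult (mmult D D') (adj E))"
proof -
  have "mmult (adj E) E = idop" using assms unfolding unitary_op_def by simp
  hence "mmult (mmult D (adj E)) (mmult E (mmult D' (adj E))) = mmult D (mmult D' (adj E))"
    by (metis mmult_assoc mmult_id_left)
  thus ?thesis by (simp add: mmult_assoc)
qed

text \<open>Entrywise, \<open>s\<^sub>k\<^sup>2 = t\<^sub>l\<^sup>2\<close> forces \<open>s\<^sub>k = t\<^sub>l\<close> wherever \<open>M l k \<noteq> 0\<close>.\<close>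
lemma intertwine_diag_op_sqrt:
  assumes s: "\<forall>i. s i \<ge> 0" and t: "\<forall>i. t i \<ge> 0"
    and M2: "mmult M (diag_op (\<lambda>k. of_real (s k * s k))) = mmult (diag_op (\<lambda>l. of_real (t l * t l))) M"
  shows "mmult M (diag_op (\<lambda>k. of_real (s k))) = mmult (diag_op (\<lambda>l. of_real (t l))) M"
proof -
  have "M l k * of_real (s k) = of_real (t l) * M l k" for l k
  proof (cases "M l k = 0")
    case False
    have "M l k * of_real (s k * s k) = of_real (t l * t l) * M l k"
      using fun_cong[OF fun_cong[OF M2, of l], of k] unfolding mmult_diag_op_right mmult_diag_op_left .
    with False have "s k * s k = t l * t l" by (simp add: mult.commute flip: of_real_mult)
    hence "s k = t l" using s t by (metis abs_of_nonneg real_sqrt_abs2 power2_eq_square)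
    thus ?thesis by (simp add: mult.commute)
  qed simp
  thus ?thesis unfolding mmult_diag_op_right mmult_diag_op_left by (auto intro!: ext)
qed

lemma psd_sqrt_unique:
  fixes S T :: "'n::finite qop"
  assumes S: "psd S" and T: "psd T" and eq: "mmult S S = mmult T T"
  shows "S = T"
proof -
  obtain F s where F: "unitary_op F" and s: "\<forall>i. s i \<ge> 0" and Sd: "S = mmult F (mmult (diag_op (\<lambda>i. of_real (s i))) (adj F))"
    using psd_spectral[OF S] by blast
  obtain G t where G: "unitary_op G" and t: "\<forall>i. t i \<ge> 0" and Td: "T = mmult G (mmult (diag_op (\<lambda>i. of_real (t i))) (adj G))"
    using psd_spectral[OF T] by blast
  define Ds where "Ds = diag_op (\<lambda>i. complex_of_real (s i))"
  define Dt where "Dt = diag_op (\<lambda>i. complex_of_real (t i))"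
  define M where "M = mmult (adj G) F"
  have FF: "mmult (adj F) F = idop" "mmult F (adj F) = idop" using F unfolding unitary_op_def by auto
  have GG: "mmult (adj G) G = idop" "mmult G (adj G) = idop" using G unfolding unitary_op_def by auto
  have "mmult (adj G) (mmult (mmult S S) F) = mmult M (mmult Ds Ds)"
    unfolding Sd Ds_def mmult_unitary_conj[OF F] M_def by (simp add: mmult_assoc FF flip: mmult_assoc[of "adj F" F])
  moreover have "mmult (adj G) (mmult (mmult T T) F) = mmult (mmult Dt Dt) M"
    unfolding Td Dt_def mmult_unitary_conj[OF G] M_def by (simp add: mmult_assoc GG flip: mmult_assoc[of "adj G" G])
  ultimately have "mmult M (mmult Ds Ds) = mmult (mmult Dt Dt) M" using eq by simp
  hence MD: "mmult M Ds = mmult Dt M"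
    unfolding Ds_def Dt_def mmult_diag_op using intertwine_diag_op_sqrt[OF s t] by (simp add: of_real_mult)
  have "mmult (adj G) S = mmult (mmult M Ds) (adj F)" unfolding Sd M_def Ds_def by (simp add: mmult_assoc)
  also have "\<dots> = mmult (mmult Dt M) (adj F)" using MD by simp
  also have "\<dots> = mmult Dt (adj G)" unfolding M_def by (simp add: mmult_assoc FF)
  finally have "mmult G (mmult (adj G) S) = mmult G (mmult Dt (adj G))" by simp
  thus ?thesis unfolding Td Dt_def by (simp flip: mmult_assoc add: GG)
qed

lemma psd_sqrt_exists:
  fixes A :: "'n::finite qop"
  assumes "psd A"
  shows "\<exists>S. psd S \<and> mmult S S = A"
proof -
  obtain E f where E: "unitary_op E" and f: "\<forall>i. f i \<ge> 0" and A: "A = mmult E (mmult (diag_op (\<lambda>i. of_real (f i))) (adj E))"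
    using psd_spectral[OF assms] by blast
  define S where "S = mmult E (mmult (diag_op (\<lambda>i. of_real (sqrt (f i)))) (adj E))"
  have "psd S" unfolding S_def by (rule psd_unitary_conj_diag_op) (simp add: f)
  moreover have "mmult S S = A" unfolding S_def mmult_unitary_conj[OF E] mmult_diag_op A
    by (simp add: f flip: of_real_mult)
  ultimately show ?thesis by blast
qed

lemma msqrt_spec:
  assumes "psd A" shows "psd (msqrt A) \<and> mmult (msqrt A) (msqrt A) = A"
proof -
  have "\<exists>!S. psd S \<and> mmult S S = A"
    using psd_sqrt_exists[OF assms] psd_sqrt_unique by metis
  thus ?thesis unfolding msqrt_def by (rule theI')
qed

lemma psd_msqrt: "psd A \<Longrightarrow> psd (msqrt A)"
  using msqrt_spec by blast

lemma msqrt_square: "psd A \<Longrightarrow> mmult (msqrt A) (msqrt A) = A"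
  using msqrt_spec by blast

lemma psd_mmult_self: assumes "psd S" shows "psd (mmult S S)"
proof -
  have H: "hermitian S" by (rule psd_hermitian[OF assms])
  show ?thesis unfolding psd_def
  proof
    fix v
    have "(\<Sum>i\<in>UNIV. \<Sum>j\<in>UNIV. cnj (v i) * mmult S S i j * v j) = vinner (mat_vec S v) (mat_vec S v)"
      unfolding qform_def[symmetric] qform_eq_vinner mat_vec_mmult hermitian_vinner_swap[OF H] ..
    thus "Im (\<Sum>i\<in>UNIV. \<Sum>j\<in>UNIV. cnj (v i) * mmult S S i j * v j) = 0 \<and>
      0 \<le> Re (\<Sum>i\<in>UNIV. \<Sum>j\<in>UNIV. cnj (v i) * mmult S S i j * v j)"
      using vinner_self_Im[of "mat_vec S v"] vinner_self_ge0[of "mat_vec S v"] by simp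
  qed
qed

lemma msqrt_mmult_self:
  fixes S :: "'n::finite qop"
  assumes "psd S"
  shows "msqrt (mmult S S) = S"
  using psd_msqrt[OF psd_mmult_self[OF assms]] msqrt_square[OF psd_mmult_self[OF assms]] psd_sqrt_unique assms by metis

section \<open>Trace norm and fidelity\<close>

definition op_col :: "'n qop \<Rightarrow> 'n \<Rightarrow> ('n \<Rightarrow> complex)" where "op_col E k = (\<lambda>i. E i k)"

lemma vinner_op_col: "unitary_op E \<Longrightarrow> vinner (op_col E k) (op_col E l) = (if k = l then 1 else 0)"
  unfolding unitary_op_def op_col_def vinner_def
  by (drule conjunct1, drule fun_cong[of _ _ k], drule fun_cong[of _ _ l]) (simp add: mmult_def adj_def idop_def)

lemma mat_vec_op_col: "mat_vec A (op_col E k) = op_col (mmult A E) k"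
  unfolding mat_vec_def op_col_def mmult_def by simp

lemma tr_eq_sum_unitary_columns: "unitary_op E \<Longrightarrow> tr X = (\<Sum>k\<in>UNIV. vinner (op_col E k) (mat_vec X (op_col E k)))"
proof -
  assume U: "unitary_op E"
  have "tr X = tr (mmult (mmult X E) (adj E))" using U unfolding unitary_op_def by (simp add: mmult_assoc)
  also have "\<dots> = tr (mmult (adj E) (mmult X E))" by (rule tr_mmult_comm)
  also have "\<dots> = (\<Sum>k\<in>UNIV. vinner (op_col E k) (mat_vec X (op_col E k)))"
    unfolding tr_def mat_vec_op_col unfolding mmult_def adj_def op_col_def vinner_def by simp
  finally show ?thesis .
qed

lemma unitary_conj_diag_op_column:
  assumes U: "unitary_op E"
  shows "mat_vec (mmult E (mmult (diag_op d) (adj E))) (op_col E k) = (\<lambda>i. d k * op_col E k i)"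
proof -
  have "mmult (mmult E (mmult (diag_op d) (adj E))) E = mmult E (diag_op d)"
    using U unfolding unitary_op_def by (simp add: mmult_assoc)
  thus ?thesis by (simp only: mat_vec_op_col mmult_diag_op_right) (simp add: op_col_def mult.commute)
qed

lemma tr_unitary_conj_diag_op: "unitary_op E \<Longrightarrow> tr (mmult E (mmult (diag_op d) (adj E))) = (\<Sum>k\<in>UNIV. d k)"
proof -
  assume U: "unitary_op E"
  have "tr (mmult E (mmult (diag_op d) (adj E))) = tr (mmult (mmult (diag_op d) (adj E)) E)" by (rule tr_mmult_comm)
  also have "\<dots> = tr (diag_op d)" using U unfolding unitary_op_def by (simp add: mmult_assoc)
  also have "\<dots> = (\<Sum>k\<in>UNIV. d k)" unfolding tr_def diag_op_def by simp
  finally show ?thesis .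
qed

lemma cmod_vinner_le_unit:
  assumes "vinner u u = 1"
  shows "cmod (vinner u v) \<le> sqrt (Re (vinner v v))"
proof -
  define w where "w = (\<lambda>i. v i - vinner u v * u i)"
  have "vinner w w = vinner v v - cnj (vinner u v) * vinner u v"
  proof -
    have "vinner w w = vinner v v - vinner u v * vinner v u - cnj (vinner u v) * vinner u v + cnj (vinner u v) * vinner u v * vinner u u"
      unfolding w_def by (simp only: vinner_diff_left vinner_diff_right vinner_scale_left vinner_scale_right) (simp add: algebra_simps)
    thus ?thesis using assms vinner_sym[of v u] by (simp add: algebra_simps)
  qed
  hence "Re (vinner v v) - (cmod (vinner u v))^2 = Re (vinner w w)"
  proof -
    assume h: "vinner w w = vinner v v - cnj (vinner u v) * vinner u v"
    have "cnj (vinner u v) * vinner u v = of_real ((cmod (vinner u v))^2)" by (simp only: complex_norm_square mult.commute)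
    with h show ?thesis by simp
  qed
  hence "(cmod (vinner u v))^2 \<le> Re (vinner v v)" using vinner_self_ge0[of w] by linarith
  thus ?thesis by (simp add: real_le_rsqrt)
qed

lemma psd_adj_mmult: "psd (mmult (adj X) X)"
  unfolding psd_def
proof
  fix v
  have "(\<Sum>i\<in>UNIV. \<Sum>j\<in>UNIV. cnj (v i) * mmult (adj X) X i j * v j) = vinner (mat_vec X v) (mat_vec X v)"
    unfolding qform_def[symmetric] qform_eq_vinner mat_vec_mmult by (metis adj_adj vinner_adj)
  thus "Im (\<Sum>i\<in>UNIV. \<Sum>j\<in>UNIV. cnj (v i) * mmult (adj X) X i j * v j) = 0 \<and>
      0 \<le> Re (\<Sum>i\<in>UNIV. \<Sum>j\<in>UNIV. cnj (v i) * mmult (adj X) X i j * v j)"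
    using vinner_self_Im[of "mat_vec X v"] vinner_self_ge0[of "mat_vec X v"] by simp
qed

text \<open>In an eigenbasis of \<open>|X| = sqrt (X\<^sup>\<dagger> X)\<close>, Cauchy--Schwarz bounds each diagonal entry of \<open>X\<close> by the
  corresponding eigenvalue of \<open>|X|\<close>.\<close>
lemma trace_norm_ge_Re_tr: "Re (tr X) \<le> trace_norm X"
proof -
  define P where "P = msqrt (mmult (adj X) X)"
  have Ppsd: "psd P" and PP: "mmult P P = mmult (adj X) X" unfolding P_def using psd_msqrt msqrt_square psd_adj_mmult by auto
  obtain E p where U: "unitary_op E" and p: "\<forall>i. p i \<ge> 0" and Pd: "P = mmult E (mmult (diag_op (\<lambda>i. of_real (p i))) (adj E))"
    using psd_spectral[OF Ppsd] by blast
  have tn: "trace_norm X = (\<Sum>k\<in>UNIV. p k)"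
    unfolding trace_norm_def P_def[symmetric] by (subst Pd, subst tr_unitary_conj_diag_op[OF U]) simp
  have bound: "Re (vinner (op_col E k) (mat_vec X (op_col E k))) \<le> p k" for k
  proof -
    let ?c = "op_col E k"
    have Pc: "mat_vec P ?c = (\<lambda>i. of_real (p k) * ?c i)" unfolding Pd by (rule unitary_conj_diag_op_column[OF U])
    have "vinner (mat_vec X ?c) (mat_vec X ?c) = vinner ?c (mat_vec (adj X) (mat_vec X ?c))" by (metis adj_adj vinner_adj)
    also have "\<dots> = vinner ?c (mat_vec P (mat_vec P ?c))" unfolding mat_vec_mmult[symmetric] PP ..
    also have "\<dots> = of_real (p k * p k) * vinner ?c ?c" unfolding Pc mat_vec_scale vinner_scale_right by simp
    also have "\<dots> = of_real (p k * p k)" using vinner_op_col[OF U, of k k] by simp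
    finally have "sqrt (Re (vinner (mat_vec X ?c) (mat_vec X ?c))) = p k" using p by simp
    moreover have "cmod (vinner ?c (mat_vec X ?c)) \<le> sqrt (Re (vinner (mat_vec X ?c) (mat_vec X ?c)))"
      by (rule cmod_vinner_le_unit) (simp add: vinner_op_col[OF U])
    ultimately show ?thesis using complex_Re_le_cmod order_trans by metis
  qed
  have "Re (tr X) = (\<Sum>k\<in>UNIV. Re (vinner (op_col E k) (mat_vec X (op_col E k))))" unfolding tr_eq_sum_unitary_columns[OF U] by simp
  also have "\<dots> \<le> (\<Sum>k\<in>UNIV. p k)" by (rule sum_mono) (rule bound)
  finally show ?thesis unfolding tn .
qed

lemma trace_norm_unitary_left: "mmult (adj S) S = idop \<Longrightarrow> trace_norm (mmult S Y) = trace_norm Y"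
  unfolding trace_norm_def adj_mmult by (simp add: mmult_assoc flip: mmult_assoc[of "adj S" S])

lemma mat_vec_msub: "mat_vec (msub A B) v = (\<lambda>i. mat_vec A v i - mat_vec B v i)"
  unfolding mat_vec_def msub_def by (simp add: left_diff_distrib sum_subtractf)

lemma adj_msub: "adj (msub A B) = msub (adj A) (adj B)"
  unfolding adj_def msub_def by auto

lemma hermitian_msub: "hermitian A \<Longrightarrow> hermitian B \<Longrightarrow> hermitian (msub A B)"
  unfolding hermitian_def adj_msub by simp

lemma tr_msub: "tr (msub A B) = tr A - tr B"
  unfolding tr_def msub_def by (simp add: sum_subtractf)

lemma mmult_msub_left: "mmult (msub A B) C = msub (mmult A C) (mmult B C)"
  unfolding mmult_def msub_def by (auto intro!: ext simp: left_diff_distrib sum_subtractf)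

lemma mmult_msub_right: "mmult C (msub A B) = msub (mmult C A) (mmult C B)"
  unfolding mmult_def msub_def by (auto intro!: ext simp: right_diff_distrib sum_subtractf)

lemma adj_unitary_conj_diag_op: "adj (mmult E (mmult (diag_op d) (adj E))) = mmult E (mmult (diag_op (\<lambda>i. cnj (d i))) (adj E))"
proof -
  have "adj (diag_op d) = diag_op (\<lambda>i. cnj (d i))" by (auto simp: adj_def diag_op_def fun_eq_iff)
  thus ?thesis unfolding adj_mmult by (simp add: mmult_assoc)
qed

lemma unitary_conj_sign_diag:
  assumes U: "unitary_op E" and sg: "\<And>k. sg k * sg k = (1::real)"
  defines "S \<equiv> mmult E (mmult (diag_op (\<lambda>i. of_real (sg i))) (adj E))"
  shows "adj S = S" and "mmult (adj S) S = idop"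
proof -
  show SH: "adj S = S" unfolding S_def adj_unitary_conj_diag_op by simp
  have "mmult S S = mmult E (mmult (diag_op (\<lambda>i. of_real (sg i * sg i))) (adj E))"
    unfolding S_def mmult_unitary_conj[OF U] mmult_diag_op by simp
  also have "\<dots> = idop" using U unfolding sg unitary_op_def by (simp flip: idop_def add: diag_op_def)
  finally show "mmult (adj S) S = idop" unfolding SH .
qed

text \<open>With \<open>A c = B c + q c\<close>, the diagonal entry of \<open>A\<^sup>2 - B\<^sup>2\<close> at \<open>c\<close> is \<open>2 q \<langle>c, B c\<rangle> + q\<^sup>2\<close>; its
  sign-weighted value dominates \<open>q\<^sup>2\<close> because \<open>\<langle>c, B c\<rangle> \<ge> 0\<close> and \<open>\<langle>c, A c\<rangle> = \<langle>c, B c\<rangle> + q \<ge> 0\<close>.\<close>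
lemma eigenvalue_sq_le_diff_squares:
  fixes A B :: "'n::finite qop"
  assumes A: "psd A" and B: "psd B" and c1: "vinner c c = 1"
    and Qc: "mat_vec (msub A B) c = (\<lambda>i. of_real q * c i)"
  shows "q * q \<le> (if q \<ge> 0 then 1 else -1) * Re (vinner c (mat_vec (msub (mmult A A) (mmult B B)) c))"
proof -
  have Ac: "mat_vec A c = (\<lambda>i. mat_vec B c i + of_real q * c i)"
    using Qc unfolding mat_vec_msub by (auto simp: fun_eq_iff algebra_simps dest: fun_cong)
  define b where "b = vinner c (mat_vec B c)"
  have bc: "vinner (mat_vec B c) c = b" unfolding b_def using hermitian_vinner_swap[OF psd_hermitian[OF B]] by metis
  have "vinner c (mat_vec (msub (mmult A A) (mmult B B)) c) = vinner (mat_vec A c) (mat_vec A c) - vinner (mat_vec B c) (mat_vec B c)"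
    unfolding mat_vec_msub vinner_diff_right mat_vec_mmult
    by (simp only: hermitian_vinner_swap[OF psd_hermitian[OF A], of c] hermitian_vinner_swap[OF psd_hermitian[OF B], of c])
  also have "\<dots> = of_real q * b + of_real q * b + of_real (q * q)"
    unfolding Ac by (simp add: vinner_add_left vinner_add_right vinner_scale_left vinner_scale_right bc c1 b_def algebra_simps)
  finally have Y: "Re (vinner c (mat_vec (msub (mmult A A) (mmult B B)) c)) = 2 * q * Re b + q * q" by simp
  have b0: "Re b \<ge> 0" using B[unfolded psd_def qform_def[symmetric] qform_eq_vinner, rule_format, of c] b_def by simp
  have "vinner c (mat_vec A c) = b + of_real q" unfolding Ac vinner_add_right vinner_scale_right c1 b_def by simp
  hence a0: "Re b + q \<ge> 0" using A[unfolded psd_def qform_def[symmetric] qform_eq_vinner, rule_format, of c] by simp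
  show ?thesis
  proof (cases "q \<ge> 0")
    case True thus ?thesis unfolding Y using b0 by simp
  next
    case False
    hence "- q * (Re b + q) \<ge> 0" using a0 by (intro mult_nonneg_nonneg) auto
    thus ?thesis unfolding Y using False by (simp add: algebra_simps)
  qed
qed

text \<open>Powers--Stormer inequality \<open>\<parallel>A - B\<parallel>\<^sub>2\<^sup>2 \<le> \<parallel>A\<^sup>2 - B\<^sup>2\<parallel>\<^sub>1\<close>: test \<open>A\<^sup>2 - B\<^sup>2\<close> against the
  unitary \<open>sgn (A - B)\<close> in the eigenbasis of \<open>A - B\<close>.\<close>
lemma powers_stormer:
  fixes A B :: "'n::finite qop"
  assumes A: "psd A" and B: "psd B"
  shows "Re (tr (mmult (msub A B) (msub A B))) \<le> trace_norm (msub (mmult A A) (mmult B B))"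
proof -
  define Q where "Q = msub A B"
  define Y where "Y = msub (mmult A A) (mmult B B)"
  have "hermitian Q" unfolding Q_def using A B by (intro hermitian_msub psd_hermitian)
  then obtain E q where U: "unitary_op E" and Qd: "Q = mmult E (mmult (diag_op (\<lambda>i. of_real (q i))) (adj E))"
    using hermitian_spectral by blast
  define sg where "sg k = (if q k \<ge> 0 then 1 else -1 :: real)" for k
  define S where "S = mmult E (mmult (diag_op (\<lambda>i. of_real (sg i))) (adj E))"
  have sg: "\<And>k. sg k * sg k = 1" unfolding sg_def by auto
  have S: "adj S = S" "mmult (adj S) S = idop"
    unfolding S_def by (fact unitary_conj_sign_diag[OF U sg])+
  have "Re (tr (mmult Q Q)) = (\<Sum>k\<in>UNIV. q k * q k)"
    unfolding Qd mmult_unitary_conj[OF U] mmult_diag_op tr_unitary_conj_diag_op[OF U] by simp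
  also have "\<dots> \<le> (\<Sum>k\<in>UNIV. sg k * Re (vinner (op_col E k) (mat_vec Y (op_col E k))))"
  proof (intro sum_mono)
    fix k
    have "mat_vec (msub A B) (op_col E k) = (\<lambda>i. of_real (q k) * op_col E k i)"
      unfolding Q_def[symmetric] Qd by (rule unitary_conj_diag_op_column[OF U])
    thus "q k * q k \<le> sg k * Re (vinner (op_col E k) (mat_vec Y (op_col E k)))"
      unfolding sg_def Y_def using A B vinner_op_col[OF U] by (intro eigenvalue_sq_le_diff_squares) simp_all
  qed
  also have "\<dots> = Re (tr (mmult S Y))"
  proof -
    have "vinner (op_col E k) (mat_vec (mmult S Y) (op_col E k))
        = of_real (sg k) * vinner (op_col E k) (mat_vec Y (op_col E k))" for k
    proof -
      have "vinner (op_col E k) (mat_vec (mmult S Y) (op_col E k))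
          = vinner (mat_vec S (op_col E k)) (mat_vec Y (op_col E k))"
        by (simp only: mat_vec_mmult vinner_adj[of _ S] S(1))
      thus ?thesis unfolding S_def unitary_conj_diag_op_column[OF U] vinner_scale_left by simp
    qed
    thus ?thesis unfolding tr_eq_sum_unitary_columns[OF U] by simp
  qed
  also have "\<dots> \<le> trace_norm Y"
    using trace_norm_ge_Re_tr[of "mmult S Y"] trace_norm_unitary_left[OF S(2)] by simp
  finally show ?thesis unfolding Q_def Y_def .
qed

text \<open>\<open>F(\<rho>, \<sigma>) = \<parallel>\<surd>\<rho> \<surd>\<sigma>\<parallel>\<^sub>1 \<ge> Re tr (\<surd>\<rho> \<surd>\<sigma>) = 1 - \<parallel>\<surd>\<rho> - \<surd>\<sigma>\<parallel>\<^sub>2\<^sup>2 / 2\<close>, and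
  Powers--Stormer bounds the last norm by \<open>\<parallel>\<rho> - \<sigma>\<parallel>\<^sub>1\<close>.\<close>
lemma gen_fidelity_ge_one_minus_half_trace_norm:
  fixes \<rho> \<sigma> :: "'n::finite qop"
  assumes r: "density_op \<rho>" and s: "density_op \<sigma>"
  shows "gen_fidelity \<rho> \<sigma> \<ge> 1 - trace_norm (msub \<rho> \<sigma>) / 2"
proof -
  define A where "A = msqrt \<rho>"
  define B where "B = msqrt \<sigma>"
  have A: "psd A" "mmult A A = \<rho>" using r psd_msqrt msqrt_square unfolding A_def density_op_def by auto
  have B: "psd B" "mmult B B = \<sigma>" using s psd_msqrt msqrt_square unfolding B_def density_op_def by auto
  have tr1: "tr \<rho> = 1" "tr \<sigma> = 1" using r s unfolding density_op_def by auto
  have "tr (mmult (msub A B) (msub A B)) = tr \<rho> - tr (mmult B A) - (tr (mmult A B) - tr \<sigma>)"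
    unfolding mmult_msub_left mmult_msub_right tr_msub A(2) B(2) ..
  also have "\<dots> = 2 - 2 * tr (mmult A B)" using tr1 tr_mmult_comm[of B A] by simp
  finally have "Re (tr (mmult (msub A B) (msub A B))) = 2 - 2 * Re (tr (mmult A B))" by simp
  with powers_stormer[OF A(1) B(1)] A(2) B(2)
  have "2 - 2 * Re (tr (mmult A B)) \<le> trace_norm (msub \<rho> \<sigma>)" by simp
  moreover have "Re (tr (mmult A B)) \<le> trace_norm (mmult A B)" by (rule trace_norm_ge_Re_tr)
  moreover have "gen_fidelity \<rho> \<sigma> = trace_norm (mmult A B)"
    unfolding gen_fidelity_def A_def B_def using tr1 by simp
  ultimately show ?thesis by linarith
qed

section \<open>Positivity of block operators\<close>

lemma psd_iff_qform: "psd A \<longleftrightarrow> (\<forall>v. Im (qform A v) = 0 \<and> Re (qform A v) \<ge> 0)"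
  unfolding psd_def qform_def ..

lemma psd_smul: assumes "psd A" and "c \<ge> 0" shows "psd (smul (of_real c) A)"
proof -
  have "qform (smul (of_real c) A) v = of_real c * qform A v" for v
    unfolding qform_def smul_def by (simp add: sum_distrib_left mult_ac)
  thus ?thesis using assms unfolding psd_iff_qform by simp
qed

lemma psd_sum: assumes "\<And>t. psd (A t)" shows "psd (\<lambda>x y. \<Sum>t\<in>T. A t x y)"
proof -
  have "qform (\<lambda>x y. \<Sum>t\<in>T. A t x y) v = (\<Sum>t\<in>T. qform (A t) v)" for v
    unfolding qform_def by (simp add: sum_distrib_left sum_distrib_right mult.assoc)
      (subst (2) sum.swap, rule sum.cong[OF refl], rule sum.swap)
  thus ?thesis using assms unfolding psd_iff_qform by (simp add: Im_sum Re_sum sum_nonneg)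
qed

lemma sum_fibres_mult:
  fixes f :: "'x::finite \<Rightarrow> 'a::comm_semiring_0" and g :: "'m::finite \<Rightarrow> 'a"
  shows "(\<Sum>m\<in>UNIV. (\<Sum>x\<in>UNIV. if ok x \<and> \<phi> x = m then f x else 0) * g m)
       = (\<Sum>x\<in>UNIV. if ok x then f x * g (\<phi> x) else 0)"
proof -
  have "(\<Sum>m\<in>UNIV. (\<Sum>x\<in>UNIV. if ok x \<and> \<phi> x = m then f x else 0) * g m)
      = (\<Sum>x\<in>UNIV. \<Sum>m\<in>UNIV. if ok x \<and> \<phi> x = m then f x * g m else 0)"
    by (simp add: sum_distrib_right if_distrib[of "\<lambda>z. z * _"] cong: if_cong) (rule sum.swap)
  also have "\<dots> = (\<Sum>x\<in>UNIV. if ok x then f x * g (\<phi> x) else 0)"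
  proof (intro sum.cong refl)
    fix x show "(\<Sum>m\<in>UNIV. if ok x \<and> \<phi> x = m then f x * g m else 0) = (if ok x then f x * g (\<phi> x) else 0)"
      by (cases "ok x") simp_all
  qed
  finally show ?thesis .
qed

text \<open>A compression \<open>V\<^sup>\<dagger> B V\<close> by a partial injection \<open>V\<close> (the partial map \<open>\<phi>\<close> defined on \<open>ok\<close>)
  evaluates the quadratic form of \<open>B\<close> at the pushed-forward vector.\<close>
lemma qform_compression:
  fixes B :: "'m::finite qop" and v :: "'x::finite \<Rightarrow> complex"
  shows "qform (\<lambda>x y. if ok x \<and> ok y then B (\<phi> x) (\<phi> y) else 0) v
       = qform B (\<lambda>m. \<Sum>x\<in>UNIV. if ok x \<and> \<phi> x = m then v x else 0)"
proof -
  let ?w = "\<lambda>m. \<Sum>x\<in>UNIV. if ok x \<and> \<phi> x = m then v x else 0"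
  have inner: "(\<Sum>m'\<in>UNIV. B m m' * ?w m') = (\<Sum>y\<in>UNIV. if ok y then B m (\<phi> y) * v y else 0)" for m
    using sum_fibres_mult[of ok \<phi> v "B m"] by (simp add: mult.commute cong: if_cong)
  have "qform B ?w = (\<Sum>m\<in>UNIV. cnj (?w m) * (\<Sum>m'\<in>UNIV. B m m' * ?w m'))"
    unfolding qform_def by (simp add: sum_distrib_left mult.assoc)
  also have "\<dots> = (\<Sum>m\<in>UNIV. (\<Sum>x\<in>UNIV. if ok x \<and> \<phi> x = m then cnj (v x) else 0) *
                      (\<Sum>y\<in>UNIV. if ok y then B m (\<phi> y) * v y else 0))"
    by (simp add: inner cnj_sum if_distrib[of cnj] cong: if_cong)
  also have "\<dots> = (\<Sum>x\<in>UNIV. if ok x then cnj (v x) * (\<Sum>y\<in>UNIV. if ok y then B (\<phi> x) (\<phi> y) * v y else 0) else 0)"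
    by (rule sum_fibres_mult)
  also have "\<dots> = qform (\<lambda>x y. if ok x \<and> ok y then B (\<phi> x) (\<phi> y) else 0) v"
    unfolding qform_def by (intro sum.cong refl) (auto simp: sum_distrib_left mult.assoc intro!: sum.cong)
  finally show ?thesis ..
qed

lemma psd_compression:
  assumes "psd B" shows "psd (\<lambda>x y. if ok x \<and> ok y then B (\<phi> x) (\<phi> y) else 0)"
  using assms unfolding psd_iff_qform qform_compression by blast

lemma psd_sum_compressions:
  fixes B :: "'t::finite \<Rightarrow> 'm::finite qop" and \<phi> :: "'t \<Rightarrow> 'x::finite \<Rightarrow> 'm"
  assumes "\<And>t. psd (B t)" and "\<And>t. c t \<ge> 0"
  shows "psd (\<lambda>x y. \<Sum>t\<in>UNIV. if ok t x \<and> ok t y then of_real (c t) * B t (\<phi> t x) (\<phi> t y) else 0)"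
proof -
  have "psd (smul (of_real (c t)) (\<lambda>x y. if ok t x \<and> ok t y then B t (\<phi> t x) (\<phi> t y) else 0))" for t
    by (intro psd_smul psd_compression assms)
  hence "psd (\<lambda>x y. \<Sum>t\<in>UNIV. smul (of_real (c t)) (\<lambda>x y. if ok t x \<and> ok t y then B t (\<phi> t x) (\<phi> t y) else 0) x y)"
    by (rule psd_sum)
  thus ?thesis by (simp add: smul_def if_distrib[of "\<lambda>z. _ * z"] cong: if_cong)
qed

lemma sum_UNIV_prod: "(\<Sum>t\<in>(UNIV::('a::finite \<times> 'b::finite) set). f t) = (\<Sum>a\<in>UNIV. \<Sum>b\<in>UNIV. f (a, b))"
  by (simp add: sum.cartesian_product flip: UNIV_Times_UNIV)

lemma psd_ptrace_fst: "psd X \<Longrightarrow> psd (ptrace_fst X)"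
  using psd_sum_compressions[where B="\<lambda>_. X" and c="\<lambda>_. 1" and ok="\<lambda>_ _. True" and \<phi>=Pair]
  unfolding ptrace_fst_def by simp

lemma psd_tensor_scaled_idop:
  assumes "psd P" and "c \<ge> 0"
  shows "psd (tensor (smul (of_real c) (idop :: 'k::finite qop)) P)"
proof -
  have "tensor (smul (of_real c) (idop :: 'k qop)) P =
      (\<lambda>x y. \<Sum>t\<in>UNIV. if fst x = t \<and> fst y = t then of_real c * P (snd x) (snd y) else 0)"
    unfolding tensor_def smul_def idop_def by (auto intro!: ext simp: sum.neutral)
  thus ?thesis using psd_sum_compressions[where B="\<lambda>_. P" and c="\<lambda>_. c" and \<phi>="\<lambda>_. snd"] assms
    by simp
qed

lemma psd_tensor_scaled_idop_right:
  assumes "psd P" and "c \<ge> 0"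
  shows "psd (tensor P (smul (of_real c) (idop :: 'k::finite qop)))"
proof -
  have "tensor P (smul (of_real c) (idop :: 'k qop)) =
      (\<lambda>x y. \<Sum>t\<in>UNIV. if snd x = t \<and> snd y = t then of_real c * P (fst x) (fst y) else 0)"
    unfolding tensor_def smul_def idop_def by (auto intro!: ext simp: sum.neutral)
  thus ?thesis using psd_sum_compressions[where B="\<lambda>_. P" and c="\<lambda>_. c" and \<phi>="\<lambda>_. fst"] assms
    by simp
qed

lemma psd_pinch_relabel:
  fixes Y :: "(('a1::finite \<times> 'a2::finite) \<times> 'e::finite) qop"
  assumes "psd Y" shows "psd (pinch_relabel Y)"
proof -
  have "pinch_relabel Y = (\<lambda>x y. \<Sum>t\<in>UNIV. if fst x = fst t \<and> fst y = fst t then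
       of_real 1 * Y (t, snd x) (t, snd y) else 0)"
    unfolding pinch_relabel_def sum_UNIV_prod
    by (auto intro!: ext simp: sum.neutral if_distrib[of "sum _"] sum.If_cases)
  thus ?thesis using psd_sum_compressions[where B="\<lambda>_. Y" and c="\<lambda>_. 1" and \<phi>="\<lambda>t x. (t, snd x)"] assms
    by simp
qed

lemma psd_conj: assumes "psd X" shows "psd (mmult W (mmult X (adj W)))"
proof -
  have "qform (mmult W (mmult X (adj W))) v = qform X (mat_vec (adj W) v)" for v
    unfolding qform_eq_vinner mat_vec_mmult vinner_adj ..
  thus ?thesis using assms unfolding psd_iff_qform by simp
qed

lemma psd_meas: "psd X \<Longrightarrow> psd (meas U X)"
  unfolding meas_def by (intro psd_pinch_relabel psd_conj)

definition block_diag :: "('j::finite \<Rightarrow> ('a \<times> 'b) qop) \<Rightarrow> ('a \<times> ('b \<times> 'j)) qop" where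
  "block_diag M = (\<lambda>(k, (e, j)) (k', (e', j')). if j = j' then M j (k, e) (k', e') else 0)"

lemma psd_block_diag:
  fixes M :: "'j::finite \<Rightarrow> ('a::finite \<times> 'b::finite) qop"
  assumes "\<And>j. psd (M j)" shows "psd (block_diag M)"
proof -
  have "block_diag M = (\<lambda>x y. \<Sum>t\<in>UNIV. if snd (snd x) = t \<and> snd (snd y) = t then
       of_real 1 * M t (fst x, fst (snd x)) (fst y, fst (snd y)) else 0)"
    unfolding block_diag_def by (auto intro!: ext simp: sum.neutral)
  thus ?thesis using psd_sum_compressions[where B=M and c="\<lambda>_. 1" and \<phi>="\<lambda>_ x. (fst x, fst (snd x))"] assms
    by simp
qed

lemma cq_state_eq_block_diag:
  fixes M :: "'j::finite \<Rightarrow> ('a::finite \<times> 'b::finite) qop"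
  shows "cq_state M = block_diag (\<lambda>j. smul (of_real (1 / real CARD('j))) (M j))"
  unfolding cq_state_def block_diag_def smul_def by (auto intro!: ext simp: divide_inverse mult.commute)

lemma psd_cq_state:
  fixes M :: "'j::finite \<Rightarrow> ('a::finite \<times> 'b::finite) qop"
  shows "(\<And>j. psd (M j)) \<Longrightarrow> psd (cq_state M)"
  unfolding cq_state_eq_block_diag by (intro psd_block_diag psd_smul) simp_all

lemma tr_prod: "tr (X :: ('a::finite \<times> 'b::finite) qop) = (\<Sum>a\<in>UNIV. \<Sum>b\<in>UNIV. X (a, b) (a, b))"
  unfolding tr_def sum_UNIV_prod ..

lemma tr_ptrace_fst: "tr (ptrace_fst X) = tr X"
  unfolding tr_prod unfolding tr_def ptrace_fst_def by (rule sum.swap)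

lemma tr_tensor_scaled_idop:
  fixes P :: "'b::finite qop"
  shows "tr (tensor (smul c (idop :: 'k::finite qop)) P) = c * of_nat CARD('k) * tr P"
  unfolding tr_prod tensor_def smul_def idop_def tr_def by (simp add: sum_distrib_left mult_ac)

lemma tr_block_diag:
  fixes M :: "'j::finite \<Rightarrow> ('a::finite \<times> 'b::finite) qop"
  shows "tr (block_diag M) = (\<Sum>j\<in>UNIV. tr (M j))"
proof -
  have "tr (block_diag M) = (\<Sum>a\<in>UNIV. \<Sum>b\<in>UNIV. \<Sum>j\<in>UNIV. M j (a, b) (a, b))"
    unfolding tr_prod sum_UNIV_prod block_diag_def by simp
  also have "\<dots> = (\<Sum>j\<in>UNIV. \<Sum>a\<in>UNIV. \<Sum>b\<in>UNIV. M j (a, b) (a, b))"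
    by (subst sum.swap) (rule sum.cong[OF refl], rule sum.swap)
  finally show ?thesis unfolding tr_prod .
qed

lemma tr_smul: "tr (smul c A) = c * tr A"
  unfolding tr_def smul_def by (simp add: sum_distrib_left)

lemma tr_cq_state:
  fixes M :: "'j::finite \<Rightarrow> ('a::finite \<times> 'b::finite) qop"
  shows "tr (cq_state M) = (\<Sum>j\<in>UNIV. tr (M j)) / of_nat CARD('j)"
  unfolding cq_state_eq_block_diag tr_block_diag tr_smul by (simp add: sum_divide_distrib)

lemma tr_pinch_relabel:
  fixes Y :: "(('a1::finite \<times> 'a2::finite) \<times> 'e::finite) qop"
  shows "tr (pinch_relabel Y) = tr Y"
proof -
  have "tr (pinch_relabel Y) = (\<Sum>k\<in>UNIV. \<Sum>e\<in>UNIV. \<Sum>a2\<in>UNIV. Y ((k, a2), e) ((k, a2), e))"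
    unfolding tr_prod pinch_relabel_def by simp
  also have "\<dots> = (\<Sum>k\<in>UNIV. \<Sum>a2\<in>UNIV. \<Sum>e\<in>UNIV. Y ((k, a2), e) ((k, a2), e))"
    by (rule sum.cong[OF refl], rule sum.swap)
  finally show ?thesis unfolding tr_prod sum_UNIV_prod .
qed

lemma mmult_tensor:
  fixes A C :: "'a::finite qop" and B D :: "'b::finite qop"
  shows "mmult (tensor A B) (tensor C D) = tensor (mmult A C) (mmult B D)"
  unfolding mmult_def tensor_def sum_UNIV_prod by (auto intro!: ext simp: sum_product mult_ac)

lemma adj_tensor: "adj (tensor A B) = tensor (adj A) (adj B)"
  unfolding adj_def tensor_def by (auto intro!: ext)

lemma tensor_idop: "tensor (idop :: 'a qop) (idop :: 'b qop) = idop"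
  unfolding tensor_def idop_def by (auto intro!: ext)

lemma unitary_tensor_idop: "unitary_op U \<Longrightarrow> unitary_op (tensor U (idop :: 'b::finite qop))"
  unfolding unitary_op_def adj_tensor mmult_tensor by (simp add: tensor_idop)

lemma tr_meas:
  fixes U :: "('a1::finite \<times> 'a2::finite) qop" and X :: "(('a1 \<times> 'a2) \<times> 'e::finite) qop"
  assumes "unitary_op U"
  shows "tr (meas U X) = tr X"
proof -
  let ?W = "tensor U (idop :: 'e qop)"
  have W: "mmult (adj ?W) ?W = idop" using unitary_tensor_idop[OF assms] unfolding unitary_op_def by blast
  have "tr (mmult ?W (mmult X (adj ?W))) = tr (mmult (mmult X (adj ?W)) ?W)" by (rule tr_mmult_comm)
  also have "\<dots> = tr X" by (simp add: mmult_assoc W)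
  finally show ?thesis unfolding meas_def tr_pinch_relabel .
qed

lemma psd_tr_nonneg: "psd A \<Longrightarrow> Re (tr A) \<ge> 0"
proof -
  assume A: "psd A"
  have "A i i = qform A (unit_vec i)" for i unfolding qform_eq_vinner mat_vec_unit_vec vinner_unit_vec_left ..
  hence "tr A = (\<Sum>i\<in>UNIV. qform A (unit_vec i))" unfolding tr_def by simp
  thus ?thesis using A unfolding psd_iff_qform by (simp add: Re_sum sum_nonneg)
qed

lemma trace_norm_nonneg: "trace_norm X \<ge> 0"
  unfolding trace_norm_def by (rule psd_tr_nonneg[OF psd_msqrt[OF psd_adj_mmult]])

lemma adj_block_diag: "adj (block_diag M) = block_diag (\<lambda>j. adj (M j))"
  unfolding adj_def block_diag_def by (auto intro!: ext)

lemma mmult_block_diag: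
  fixes A B :: "'j::finite \<Rightarrow> ('a::finite \<times> 'b::finite) qop"
  shows "mmult (block_diag A) (block_diag B) = block_diag (\<lambda>j. mmult (A j) (B j))"
  unfolding mmult_def block_diag_def sum_UNIV_prod
  by (auto intro!: ext sum.cong simp: if_distrib[of "\<lambda>z. z * _"] if_distrib[of "\<lambda>z. _ * z"] cong: if_cong)

lemma trace_norm_block_diag:
  fixes D :: "'j::finite \<Rightarrow> ('a::finite \<times> 'b::finite) qop"
  shows "trace_norm (block_diag D) = (\<Sum>j\<in>UNIV. trace_norm (D j))"
proof -
  let ?S = "\<lambda>j. msqrt (mmult (adj (D j)) (D j))"
  have "mmult (adj (block_diag D)) (block_diag D) = mmult (block_diag ?S) (block_diag ?S)"
    unfolding adj_block_diag mmult_block_diag by (simp only: msqrt_square[OF psd_adj_mmult])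
  moreover have "psd (block_diag ?S)" by (rule psd_block_diag) (rule psd_msqrt[OF psd_adj_mmult])
  ultimately have "msqrt (mmult (adj (block_diag D)) (block_diag D)) = block_diag ?S"
    by (simp add: msqrt_mmult_self)
  thus ?thesis unfolding trace_norm_def by (simp add: tr_block_diag Re_sum)
qed

lemma mmult_smul: "mmult (smul a A) (smul b B) = smul (a * b) (mmult A B)"
  unfolding mmult_def smul_def by (auto intro!: ext simp: sum_distrib_left mult_ac)

lemma trace_norm_smul:
  assumes "c \<ge> 0"
  shows "trace_norm (smul (of_real c) X) = c * trace_norm X"
proof -
  let ?S = "msqrt (mmult (adj X) X)"
  have "mmult (adj (smul (of_real c) X)) (smul (of_real c) X) = mmult (smul (of_real c) ?S) (smul (of_real c) ?S)"
    unfolding mmult_smul msqrt_square[OF psd_adj_mmult]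
    unfolding mmult_def adj_def smul_def by (auto intro!: ext simp: sum_distrib_left mult_ac)
  moreover have "psd (smul (of_real c) ?S)" using assms by (intro psd_smul psd_msqrt[OF psd_adj_mmult])
  ultimately have "msqrt (mmult (adj (smul (of_real c) X)) (smul (of_real c) X)) = smul (of_real c) ?S"
    by (simp add: msqrt_mmult_self)
  thus ?thesis unfolding trace_norm_def by (simp add: tr_smul)
qed

lemma msub_cq_state: "msub (cq_state M1) (cq_state M2) = cq_state (\<lambda>j. msub (M1 j) (M2 j))"
  unfolding cq_state_def msub_def by (auto intro!: ext simp: diff_divide_distrib)

lemma trace_norm_msub_cq_state:
  fixes M N :: "'j::finite \<Rightarrow> ('a::finite \<times> 'b::finite) qop"
  shows "trace_norm (msub (cq_state M) (cq_state N))
       = (1 / real CARD('j)) * (\<Sum>j\<in>UNIV. trace_norm (msub (M j) (N j)))"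
proof -
  have "0 \<le> 1 / real CARD('j)" by simp
  thus ?thesis unfolding msub_cq_state unfolding cq_state_eq_block_diag trace_norm_block_diag
    by (simp add: trace_norm_smul sum_distrib_left del: of_real_divide)
qed

section \<open>States, distances and min-entropy\<close>

lemma density_op_tensor_maximally_mixed:
  assumes "density_op \<sigma>"
  shows "density_op (tensor (smul (1 / of_nat CARD('k)) (idop :: 'k::finite qop)) \<sigma>)"
  using assms psd_tensor_scaled_idop[of \<sigma> "1 / real CARD('k)"]
  unfolding density_op_def by (simp add: tr_tensor_scaled_idop)

lemma density_op_tensor_uniform:
  assumes "density_op \<sigma>"
  shows "density_op (tensor \<sigma> (smul (1 / of_nat CARD('j)) (idop :: 'j::finite qop)))"
proof -
  have "tr (tensor \<sigma> (smul c (idop :: 'j qop))) = c * of_nat CARD('j) * tr \<sigma>" for c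
    unfolding tr_prod tensor_def smul_def idop_def tr_def by (subst sum.swap) (simp add: sum_distrib_left mult_ac)
  thus ?thesis using assms psd_tensor_scaled_idop_right[of \<sigma> "1 / real CARD('j)"]
    unfolding density_op_def by simp
qed

lemma density_op_meas:
  assumes "density_op \<rho>" and "unitary_op U"
  shows "density_op (meas U \<rho>)"
  using assms psd_meas tr_meas unfolding density_op_def by metis

lemma density_op_cq_state:
  fixes M :: "'j::finite \<Rightarrow> ('a::finite \<times> 'b::finite) qop"
  assumes "\<And>j. density_op (M j)"
  shows "density_op (cq_state M)"
  using assms psd_cq_state[of M] unfolding density_op_def tr_cq_state by simp

lemma density_op_ptrace_fst: "density_op \<rho> \<Longrightarrow> density_op (ptrace_fst \<rho>)"
  unfolding density_op_def using psd_ptrace_fst tr_ptrace_fst by metis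

lemma cq_state_const_tensor:
  fixes A :: "'k::finite qop" and \<sigma> :: "'e::finite qop"
  shows "(cq_state (\<lambda>j::'j::finite. tensor A \<sigma>))
       = tensor A (tensor \<sigma> (smul (1 / of_nat CARD('j)) (idop :: 'j qop)))"
  unfolding cq_state_def tensor_def smul_def idop_def by (auto intro!: ext)

lemma purified_dist_le_sqrt_trace_distance:
  assumes "density_op \<rho>" and "density_op \<sigma>" and "trace_norm (msub \<rho> \<sigma>) \<le> \<epsilon>"
  shows "purified_dist \<rho> \<sigma> \<le> sqrt (2 * \<epsilon>)"
proof -
  have F1: "gen_fidelity \<rho> \<sigma> \<ge> 1 - \<epsilon> / 2"
    using gen_fidelity_ge_one_minus_half_trace_norm[OF assms(1,2)] assms(3) by linarith
  have "0 \<le> \<epsilon>" using assms(3) trace_norm_nonneg[of "msub \<rho> \<sigma>"] by linarith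
  have "1 - (gen_fidelity \<rho> \<sigma>)\<^sup>2 \<le> 2 * \<epsilon>"
  proof (cases "\<epsilon> \<le> 2")
    case True
    hence "(1 - \<epsilon> / 2)\<^sup>2 \<le> (gen_fidelity \<rho> \<sigma>)\<^sup>2" using F1 by (intro power_mono) auto
    moreover have "(1 - \<epsilon> / 2)\<^sup>2 = 1 - \<epsilon> + \<epsilon>\<^sup>2 / 4" by (simp add: power2_eq_square field_simps)
    ultimately show ?thesis using \<open>0 \<le> \<epsilon>\<close> zero_le_power2[of \<epsilon>] by linarith
  next
    case False
    thus ?thesis by (smt (verit) zero_le_power2)
  qed
  thus ?thesis unfolding purified_dist_def by (simp add: real_sqrt_le_mono)
qed

lemma hmin_tensor_maximally_mixed:
  assumes "density_op \<tau>"
  shows "ereal (log 2 (real CARD('k))) \<le> hmin (tensor (smul (1 / of_nat CARD('k)) (idop :: 'k::finite qop)) \<tau>)"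
proof -
  let ?\<omega> = "tensor (smul (1 / of_nat CARD('k)) (idop :: 'k qop)) \<tau>"
  have "2 powr (- log 2 (real CARD('k))) = 1 / real CARD('k)"
    by (simp add: powr_minus divide_inverse)
  hence "smul (complex_of_real (2 powr (- log 2 (real CARD('k))))) (tensor idop \<tau>) = ?\<omega>"
    unfolding smul_def tensor_def idop_def by (auto intro!: ext)
  hence "loewner_le ?\<omega> (smul (complex_of_real (2 powr (- log 2 (real CARD('k))))) (tensor idop \<tau>))"
    unfolding loewner_le_def msub_def by (simp add: psd_def)
  hence "ereal (log 2 (real CARD('k))) \<le> hmin_rel ?\<omega> \<tau>" unfolding hmin_rel_def by (intro Sup_upper) blast
  also have "\<dots> \<le> hmin ?\<omega>" unfolding hmin_def using assms by (intro Sup_upper) blast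
  finally show ?thesis .
qed

lemma hmin_le_hmin_smooth:
  assumes "subnormalized \<omega>" and "purified_dist \<rho> \<omega> \<le> \<delta>"
  shows "hmin \<omega> \<le> hmin_smooth \<delta> \<rho>"
  unfolding hmin_smooth_def using assms by (intro Sup_upper) blast

theorem lemma10:
  fixes \<rho> :: "(('a1::finite \<times> 'a2::finite) \<times> 'e::finite) qop"
    and U :: "'j::finite \<Rightarrow> ('a1 \<times> 'a2) qop"
    and \<epsilon> :: real
  assumes "density_op \<rho>"
    and "\<And>j. unitary_op (U j)"
    and "(1 / real CARD('j)) * (\<Sum>j\<in>UNIV. trace_norm
           (msub (meas (U j) \<rho>)
                 (tensor (smul (1 / of_nat CARD('a1)) (idop :: 'a1 qop)) (ptrace_fst \<rho>)))) \<le> \<epsilon>"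
  shows "hmin_smooth (sqrt (2 * \<epsilon>)) (cq_state (\<lambda>j. meas (U j) \<rho>))
           \<ge> ereal (log 2 (real CARD('a1)))"
proof -
  define \<omega>\<^sub>K where "\<omega>\<^sub>K = tensor (smul (1 / of_nat CARD('a1)) (idop :: 'a1 qop)) (ptrace_fst \<rho>)"
  define \<tau> where "\<tau> = tensor (ptrace_fst \<rho>) (smul (1 / of_nat CARD('j)) (idop :: 'j qop))"
  have \<omega>: "cq_state (\<lambda>j::'j. \<omega>\<^sub>K) = tensor (smul (1 / of_nat CARD('a1)) (idop :: 'a1 qop)) \<tau>"
    unfolding \<omega>\<^sub>K_def \<tau>_def by (rule cq_state_const_tensor)
  have \<tau>_dens: "density_op \<tau>"
    unfolding \<tau>_def using assms(1) by (intro density_op_tensor_uniform density_op_ptrace_fst)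
  have \<omega>_dens: "density_op (cq_state (\<lambda>j::'j. \<omega>\<^sub>K))"
    unfolding \<omega> using \<tau>_dens by (rule density_op_tensor_maximally_mixed)
  have \<rho>_dens: "density_op (cq_state (\<lambda>j. meas (U j) \<rho>))"
    using assms(1,2) by (intro density_op_cq_state density_op_meas)
  have "trace_norm (msub (cq_state (\<lambda>j. meas (U j) \<rho>)) (cq_state (\<lambda>j. \<omega>\<^sub>K))) \<le> \<epsilon>"
    using assms(3) unfolding trace_norm_msub_cq_state \<omega>\<^sub>K_def .
  hence "purified_dist (cq_state (\<lambda>j. meas (U j) \<rho>)) (cq_state (\<lambda>j. \<omega>\<^sub>K)) \<le> sqrt (2 * \<epsilon>)"
    using \<rho>_dens \<omega>_dens by (intro purified_dist_le_sqrt_trace_distance)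
  with \<omega>_dens have "hmin (cq_state (\<lambda>j::'j. \<omega>\<^sub>K)) \<le> hmin_smooth (sqrt (2 * \<epsilon>)) (cq_state (\<lambda>j. meas (U j) \<rho>))"
    by (intro hmin_le_hmin_smooth) (simp_all add: subnormalized_def density_op_def)
  moreover have "ereal (log 2 (real CARD('a1))) \<le> hmin (cq_state (\<lambda>j::'j. \<omega>\<^sub>K))"
    unfolding \<omega> using \<tau>_dens by (rule hmin_tensor_maximally_mixed)
  ultimately show ?thesis by order
qed

end
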